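(* Let $\mathcal G$ be a groupoid (standing conventions), let $M,N\in\mathbb N_+$, and let $(\epsilon_n)$ be a decreasing sequence of positive numbers with $\epsilon_n\to0$. Suppose $\mathcal G$ admits a Følner sequence $\mathcal S=(S_n)$ in which every $S_n$ is $(M,\epsilon_n)$-good and has $N$-controlled height. Then for every clopen $A\subseteq\mathcal G^{(0)}$, $$\frac1N\sup_{\mu\in M(\mathcal G)}\mu(A)\le\bar D^-_{\mathcal S}(A)\le\bar D^+_{\mathcal S}(A)\le\sup_{\mu\in M(\mathcal G)}\mu(A).$$ In particular, if $N=1$ then $\sup_{\mu\in M(\mathcal G)}\mu(A)=\bar D^-_{\mathcal S}(A)=\bar D^+_{\mathcal S}(A)$.
   Context: Standing conventions: a groupoid is a $\sigma$-compact, locally compact, Hausdorff, étale, ample groupoid $\mathcal G$ with compact unit space $\mathcal G^{(0)}$. For $A,B\subseteq\mathcal G$, $AB$ denotes composable products and $Au=\{a\in A:s(a)=u\}$. A multisection is a finite family $\{C_{i,j}:i,j\in F\}$ of bisections with $C_{i,j}C_{j,k}=C_{i,k}$ and pairwise disjoint levels $C_{i,i}\subseteq\mathcal G^{(0)}$. $M(\mathcal G)$ is the set of $\mathcal G$-invariant Borel probability measures on $\mathcal G^{(0)}$; conventions $\inf_\emptyset=+\infty$, $\sup_\emptyset=0$. A normal set is a compact open $S\subseteq\mathcal G$ together with compact open multisections $\{C^l_{i,j}:i,j\in F_l\}$, $l=1,\dots,m$, and indices $i_l\in F_l$ with $S=\bigcup_{l=1}^m\bigsqcup_{i\in F_l}C^l_{i,i_l}$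 and $\mathcal G^{(0)}=\bigsqcup_{l=1}^mC^l_{i_l,i_l}$. A Følner sequence is a sequence $(S_n)$ of normal sets with $\sup_{u}|KS_nu\setminus S_nu|/|S_nu|\to0$ for every compact $K$. Height $h(S)=\min_l|F_l|$; $N$-controlled height means $|F_l|\le N h(S)$ for all $l$. $S$ is $(M,\epsilon)$-good if there are injections $f_l:\{0,\dots,h(S)-1\}\to F_l$ with $f_l(0)=i_l$ such that (a) $\inf_{\mu\in M(\mathcal G)}\mu(\bigcup_{l=1}^mC^l_{f_l(k),f_l(k)})\ge1-\epsilon$ for all $0\le k\le h(S)-1$, and (b) there is $L\subseteq\{1,\dots,m\}$ with $\inf_{\mu\in M(\mathcal G)}\mu(\bigsqcup_{l\in L}C^l_{i_l,i_l})>1-\epsilon$ such that for each $k$ the family $\{C^l_{f_l(k),f_l(k)}:l\in L\}$ is a union of at most $M$ subfamilies of pairwise disjoint sets. Densities: $\bar D^+_{\mathcal S}(A)=\limsup_{n}\sup_{u\in\mathcal G^{(0)}}\frac{1}{|S_nu|}\sum_{\gamma\in S_nu}1_A(r(\gamma))$ and $\bar D^-_{\mathcal S}(A)=\liminf_{n}\sup_{u\in\mathcal G^{(0)}}\frac{1}{|S_nu|}\sum_{\gamma\in S_nu}1_A(r(\gamma))$. *)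

theory Defs
  imports "HOL-Analysis.Analysis" "HOL-Probability.Probability"
begin

section \<open>Topological groupoids (all elements of the type are arrows)\<close>

record 'a groupoid =
  gsrc :: "'a \<Rightarrow> 'a"
  grng :: "'a \<Rightarrow> 'a"
  gmul :: "'a \<Rightarrow> 'a \<Rightarrow> 'a"
  ginv :: "'a \<Rightarrow> 'a"

definition units :: "('a, 'b) groupoid_scheme \<Rightarrow> 'a set" where
  "units G = range (gsrc G)"

definition is_groupoid :: "('a, 'b) groupoid_scheme \<Rightarrow> bool" where
  "is_groupoid G \<longleftrightarrow>
     (\<forall>g. gsrc G (gsrc G g) = gsrc G g \<and> grng G (gsrc G g) = gsrc G g
        \<and> gsrc G (grng G g) = grng G g \<and> grng G (grng G g) = grng G g) \<and>
     (\<forall>g h. gsrc G g = grng G h \<longrightarrow>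
        gsrc G (gmul G g h) = gsrc G h \<and> grng G (gmul G g h) = grng G g) \<and>
     (\<forall>g h k. gsrc G g = grng G h \<and> gsrc G h = grng G k \<longrightarrow>
        gmul G (gmul G g h) k = gmul G g (gmul G h k)) \<and>
     (\<forall>g. gmul G (grng G g) g = g \<and> gmul G g (gsrc G g) = g) \<and>
     (\<forall>g. gsrc G (ginv G g) = grng G g \<and> grng G (ginv G g) = gsrc G g
        \<and> gmul G g (ginv G g) = grng G g \<and> gmul G (ginv G g) g = gsrc G g)"

definition local_homeo :: "('a::topological_space \<Rightarrow> 'a) \<Rightarrow> bool" where
  "local_homeo f \<longleftrightarrow> (\<forall>x. \<exists>U g. open U \<and> x \<in> U \<and> open (f ` U) \<and> homeomorphism U (f ` U) f g)"

definition setmul :: "('a, 'b) groupoid_scheme \<Rightarrow> 'a set \<Rightarrow> 'a set \<Rightarrow> 'a set" where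
  "setmul G A B = {gmul G g h | g h. g \<in> A \<and> h \<in> B \<and> gsrc G g = grng G h}"

definition fibre :: "('a, 'b) groupoid_scheme \<Rightarrow> 'a set \<Rightarrow> 'a \<Rightarrow> 'a set" where
  "fibre G A u = {a \<in> A. gsrc G a = u}"

definition bisection :: "('a::topological_space, 'b) groupoid_scheme \<Rightarrow> 'a set \<Rightarrow> bool" where
  "bisection G B \<longleftrightarrow> open B \<and> inj_on (gsrc G) B \<and> inj_on (grng G) B"

text \<open>Standing conventions: sigma-compact, locally compact, Hausdorff (type class),
  etale, ample topological groupoid with compact unit space.\<close>
definition ample_groupoid :: "('a::t2_space, 'b) groupoid_scheme \<Rightarrow> bool" where
  "ample_groupoid G \<longleftrightarrow> is_groupoid G \<and>
     continuous_on {(g, h). gsrc G g = grng G h} (\<lambda>(g, h). gmul G g h) \<and>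
     continuous_on UNIV (ginv G) \<and>
     (\<exists>K :: nat \<Rightarrow> 'a set. (\<forall>n. compact (K n)) \<and> (\<Union>n. K n) = UNIV) \<and>
     locally_compact_space (euclidean :: 'a topology) \<and>
     continuous_on UNIV (gsrc G) \<and> continuous_on UNIV (grng G) \<and>
     local_homeo (gsrc G) \<and> local_homeo (grng G) \<and>
     (\<forall>U x. open U \<and> x \<in> U \<longrightarrow> (\<exists>B. bisection G B \<and> compact B \<and> x \<in> B \<and> B \<subseteq> U)) \<and>
     compact (units G)"

definition inv_measures :: "('a::topological_space, 'b) groupoid_scheme \<Rightarrow> 'a measure set" where
  "inv_measures G = {\<mu>. prob_space \<mu> \<and> space \<mu> = units G \<and>
      sets \<mu> = sets (restrict_space borel (units G)) \<and>
      (\<forall>B. bisection G B \<longrightarrow> emeasure \<mu> (gsrc G ` B) = emeasure \<mu> (grng G ` B))}"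

text \<open>Supremum with the convention sup of the empty set = 0 (all values are nonnegative).\<close>
definition sup_measure :: "('a::topological_space, 'b) groupoid_scheme \<Rightarrow> 'a set \<Rightarrow> ereal" where
  "sup_measure G A = Sup (insert 0 ((\<lambda>\<mu>. ereal (measure \<mu> A)) ` inv_measures G))"

text \<open>Infimum with the convention inf of the empty set = +infinity.\<close>
definition inf_measure :: "('a::topological_space, 'b) groupoid_scheme \<Rightarrow> 'a set \<Rightarrow> ereal" where
  "inf_measure G A = (INF \<mu>\<in>inv_measures G. ereal (measure \<mu> A))"

definition compact_open_multisection ::
  "('a::topological_space, 'b) groupoid_scheme \<Rightarrow> nat set \<Rightarrow> (nat \<Rightarrow> nat \<Rightarrow> 'a set) \<Rightarrow> bool" where
  "compact_open_multisection G F C \<longleftrightarrow> finite F \<and>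
     (\<forall>i\<in>F. \<forall>j\<in>F. bisection G (C i j) \<and> compact (C i j)) \<and>
     (\<forall>i\<in>F. \<forall>j\<in>F. \<forall>k\<in>F. setmul G (C i j) (C j k) = C i k) \<and>
     (\<forall>i\<in>F. C i i \<subseteq> units G) \<and>
     (\<forall>i\<in>F. \<forall>j\<in>F. i \<noteq> j \<longrightarrow> C i i \<inter> C j j = {})"

text \<open>Data of a normal set: number m of multisections (indexed by l = 1..m),
  index sets F l, multisections C l, and base indices i l.\<close>
record 'a normal_data =
  nd_m :: nat
  nd_F :: "nat \<Rightarrow> nat set"
  nd_C :: "nat \<Rightarrow> nat \<Rightarrow> nat \<Rightarrow> 'a set"
  nd_i :: "nat \<Rightarrow> nat"

definition nd_set :: "'a normal_data \<Rightarrow> 'a set" where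
  "nd_set D = (\<Union>l\<in>{1..nd_m D}. \<Union>i\<in>nd_F D l. nd_C D l i (nd_i D l))"

definition normal_set :: "('a::topological_space, 'b) groupoid_scheme \<Rightarrow> 'a normal_data \<Rightarrow> bool" where
  "normal_set G D \<longleftrightarrow>
     (\<forall>l\<in>{1..nd_m D}. compact_open_multisection G (nd_F D l) (nd_C D l) \<and> nd_i D l \<in> nd_F D l) \<and>
     units G = (\<Union>l\<in>{1..nd_m D}. nd_C D l (nd_i D l) (nd_i D l)) \<and>
     (\<forall>l\<in>{1..nd_m D}. \<forall>l'\<in>{1..nd_m D}. l \<noteq> l' \<longrightarrow>
        nd_C D l (nd_i D l) (nd_i D l) \<inter> nd_C D l' (nd_i D l') (nd_i D l') = {})"

definition folner :: "('a::topological_space, 'b) groupoid_scheme \<Rightarrow> (nat \<Rightarrow> 'a normal_data) \<Rightarrow> bool" where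
  "folner G S \<longleftrightarrow> (\<forall>n. normal_set G (S n)) \<and>
     (\<forall>K. compact K \<longrightarrow>
        (\<lambda>n. SUP u\<in>units G. real (card (fibre G (setmul G K (nd_set (S n))) u - fibre G (nd_set (S n)) u))
                             / real (card (fibre G (nd_set (S n)) u))) \<longlonglongrightarrow> 0)"

definition height :: "'a normal_data \<Rightarrow> nat" where
  "height D = Min ((\<lambda>l. card (nd_F D l)) ` {1..nd_m D})"

definition controlled_height :: "nat \<Rightarrow> 'a normal_data \<Rightarrow> bool" where
  "controlled_height N D \<longleftrightarrow> (\<forall>l\<in>{1..nd_m D}. card (nd_F D l) \<le> N * height D)"

definition good :: "('a::topological_space, 'b) groupoid_scheme \<Rightarrow> nat \<Rightarrow> real \<Rightarrow> 'a normal_data \<Rightarrow> bool" where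
  "good G M \<epsilon> D \<longleftrightarrow> (\<exists>f :: nat \<Rightarrow> nat \<Rightarrow> nat.
     (\<forall>l\<in>{1..nd_m D}. inj_on (f l) {0..<height D} \<and> f l ` {0..<height D} \<subseteq> nd_F D l
        \<and> f l 0 = nd_i D l) \<and>
     (\<forall>k<height D. inf_measure G (\<Union>l\<in>{1..nd_m D}. nd_C D l (f l k) (f l k)) \<ge> ereal (1 - \<epsilon>)) \<and>
     (\<exists>L \<subseteq> {1..nd_m D}.
        inf_measure G (\<Union>l\<in>L. nd_C D l (nd_i D l) (nd_i D l)) > ereal (1 - \<epsilon>) \<and>
        (\<forall>k<height D. \<exists>c :: nat \<Rightarrow> nat. (\<forall>l\<in>L. c l < M) \<and>
           (\<forall>l\<in>L. \<forall>l'\<in>L. l \<noteq> l' \<and> c l = c l' \<longrightarrow>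
              nd_C D l (f l k) (f l k) \<inter> nd_C D l' (f l' k) (f l' k) = {}))))"

definition dens_avg :: "('a, 'b) groupoid_scheme \<Rightarrow> 'a normal_data \<Rightarrow> 'a set \<Rightarrow> 'a \<Rightarrow> real" where
  "dens_avg G D A u = (\<Sum>\<gamma>\<in>fibre G (nd_set D) u. indicator A (grng G \<gamma>)) / real (card (fibre G (nd_set D) u))"

text \<open>sup over units with the convention sup of empty set = 0 (values are nonnegative).\<close>
definition dens_sup :: "('a, 'b) groupoid_scheme \<Rightarrow> 'a normal_data \<Rightarrow> 'a set \<Rightarrow> ereal" where
  "dens_sup G D A = Sup (insert 0 ((\<lambda>u. ereal (dens_avg G D A u)) ` units G))"

definition upper_density :: "('a, 'b) groupoid_scheme \<Rightarrow> (nat \<Rightarrow> 'a normal_data) \<Rightarrow> 'a set \<Rightarrow> ereal" where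
  "upper_density G S A = limsup (\<lambda>n. dens_sup G (S n) A)"

definition lower_density :: "('a, 'b) groupoid_scheme \<Rightarrow> (nat \<Rightarrow> 'a normal_data) \<Rightarrow> 'a set \<Rightarrow> ereal" where
  "lower_density G S A = liminf (\<lambda>n. dens_sup G (S n) A)"

end

theory Submission
  imports Defs
begin

text \<open>
  Upper bound: if the density of A in S n exceeds c > 0 for infinitely many n, choose units
  u n witnessing this. The set functions K \<mapsto> dens_avg G (S n) K (u n) take values in [0, 1],
  so along these n they have a cluster point p in the compact product [0, 1]^('a set). The
  limit p is finitely additive with p (units G) = 1, and the Folner condition makes it
  invariant under compact bisections. Approximating open sets from inside by compact open
  sets and arbitrary sets from outside by open sets, Caratheodory's construction turns p
  into an invariant probability measure \<mu> with \<mu> A = p A \<ge> c.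

  Lower bound: a normal set is a disjoint family of towers over a partition of the unit space,
  and for an invariant measure \<mu> the part of A on a level of a tower has the same measure as
  its translate down to the base of the tower. If every unit sees A with density at most s in
  S n, integrating over the bases gives \<Sum>(levels) \<mu>(A \<inter> level) \<le> N * h * s, where h is the
  height. Goodness provides h slices, one level from each tower, each covering all but
  \<epsilon> n of every invariant measure, so h * (\<mu> A - \<epsilon> n) is at most the same sum. Hence
  \<mu> A \<le> N * s + \<epsilon> n, and letting n tend to infinity gives the lower bound.
\<close>

section \<open>Borel measures from contents on compact open sets\<close>

lemma sets_restrict_borel_eq_sigma_sets:
  assumes "open X"
  shows "sets (restrict_space borel X) = sigma_sets X ((\<inter>) X ` {S. open S})"
proof -
  have "sets (restrict_space borel X) = (\<inter>) X ` sigma_sets UNIV {S. open S}"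
    unfolding sets_restrict_space sets_borel by simp
  also have "\<dots> = sigma_sets X ((\<inter>) X ` {S. open S})"
    by (rule sigma_sets_Int) (use assms in auto)
  finally show ?thesis .
qed

locale compact_open_content =
  fixes X :: "'a::t2_space set" and p :: "'a set \<Rightarrow> real"
  assumes compact_space: "compact X" and open_space: "open X"
    and compact_open_basis: "\<And>U x. open U \<Longrightarrow> x \<in> U \<Longrightarrow> x \<in> X \<Longrightarrow>
          \<exists>K. compact K \<and> open K \<and> K \<subseteq> X \<and> x \<in> K \<and> K \<subseteq> U"
    and nonneg: "\<And>K. 0 \<le> p K"
    and additive: "\<And>K K'. K \<inter> K' = {} \<Longrightarrow> p (K \<union> K') = p K + p K'"
    and total: "p X = 1"
begin

definition compact_opens :: "'a set set" where
  "compact_opens = {K. compact K \<and> open K \<and> K \<subseteq> X}"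

definition inner_content :: "'a set \<Rightarrow> real" where
  "inner_content V = Sup (p ` {K \<in> compact_opens. K \<subseteq> V})"

definition outer_content :: "'a set \<Rightarrow> real" where
  "outer_content E = Inf (inner_content ` {V. open V \<and> E \<subseteq> V})"

lemma p_empty: "p {} = 0"
  using additive[of "{}" "{}"] by simp

lemma p_mono: "K \<subseteq> K' \<Longrightarrow> p K \<le> p K'"
  using additive[of K "K' - K"] nonneg[of "K' - K"] by (simp add: Un_absorb1)

lemma p_le_1: "K \<subseteq> X \<Longrightarrow> p K \<le> 1"
  using p_mono total by metis

lemma compact_opens_empty: "{} \<in> compact_opens"
  by (simp add: compact_opens_def)

lemma compact_opens_space: "X \<in> compact_opens"
  using compact_space open_space by (simp add: compact_opens_def)

lemma compact_opens_Un: "K \<in> compact_opens \<Longrightarrow> K' \<in> compact_opens \<Longrightarrow> K \<union> K' \<in> compact_opens"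
  by (auto simp: compact_opens_def)

lemma compact_opens_Diff:
  assumes "K \<in> compact_opens" "K' \<in> compact_opens"
  shows "K - K' \<in> compact_opens"
proof -
  have "closed K'" using assms by (simp add: compact_opens_def compact_imp_closed)
  then show ?thesis
    using assms by (auto simp: compact_opens_def Diff_eq compact_Int_closed open_Compl)
qed

lemma compact_opens_UN:
  "finite I \<Longrightarrow> (\<And>x. x \<in> I \<Longrightarrow> W x \<in> compact_opens) \<Longrightarrow> \<Union>(W ` I) \<in> compact_opens"
  by (auto simp: compact_opens_def)

lemma bdd_above_content: "bdd_above (p ` {K \<in> compact_opens. K \<subseteq> V})"
  by (rule bdd_aboveI[of _ 1]) (auto simp: compact_opens_def intro: p_le_1)

lemma inner_content_upper: "K \<in> compact_opens \<Longrightarrow> K \<subseteq> V \<Longrightarrow> p K \<le> inner_content V"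
  unfolding inner_content_def by (rule cSup_upper) (auto intro: bdd_above_content)

lemma inner_content_least: "(\<And>K. K \<in> compact_opens \<Longrightarrow> K \<subseteq> V \<Longrightarrow> p K \<le> c) \<Longrightarrow> inner_content V \<le> c"
  unfolding inner_content_def by (rule cSup_least) (use compact_opens_empty in auto)

lemma inner_content_nonneg: "0 \<le> inner_content V"
  using inner_content_upper[OF compact_opens_empty, of V] p_empty by simp

lemma inner_content_empty: "inner_content {} = 0"
  using inner_content_nonneg[of "{}"] inner_content_least[of "{}" 0] p_empty by force

lemma inner_content_mono: "V \<subseteq> W \<Longrightarrow> inner_content V \<le> inner_content W"
  by (rule inner_content_least) (rule inner_content_upper, auto)

lemma inner_content_compact_open: "K \<in> compact_opens \<Longrightarrow> inner_content K = p K"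
  by (meson antisym inner_content_upper inner_content_least order_refl p_mono)

lemma inner_content_approx:
  assumes "e > 0"
  shows "\<exists>K \<in> compact_opens. K \<subseteq> V \<and> inner_content V < p K + e"
proof -
  have "inner_content V - e < Sup (p ` {K \<in> compact_opens. K \<subseteq> V})"
    using assms by (simp add: inner_content_def)
  then obtain K where "K \<in> compact_opens" "K \<subseteq> V" "inner_content V - e < p K"
    using less_cSupD[of "p ` {K \<in> compact_opens. K \<subseteq> V}"] compact_opens_empty by blast
  then show ?thesis by auto
qed

lemma compact_open_split:
  assumes K: "K \<in> compact_opens" and V: "open V" "open V'" and sub: "K \<subseteq> V \<union> V'"
  shows "\<exists>K1 \<in> compact_opens. K1 \<subseteq> V \<inter> K \<and> K - K1 \<subseteq> V'"
proof -
  have "closed (-V')" using V by auto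
  then have compact_rest: "compact (K - V')"
    using K by (simp add: compact_opens_def Diff_eq compact_Int_closed)
  have "\<forall>x\<in>K - V'. \<exists>W. compact W \<and> open W \<and> W \<subseteq> X \<and> x \<in> W \<and> W \<subseteq> V \<inter> K"
  proof
    fix x assume x: "x \<in> K - V'"
    then have "x \<in> V \<inter> K" "x \<in> X" using sub K by (auto simp: compact_opens_def)
    moreover have "open (V \<inter> K)" using K V by (auto simp: compact_opens_def)
    ultimately show "\<exists>W. compact W \<and> open W \<and> W \<subseteq> X \<and> x \<in> W \<and> W \<subseteq> V \<inter> K"
      using compact_open_basis by blast
  qed
  then obtain W where W: "\<And>x. x \<in> K - V' \<Longrightarrow>
      compact (W x) \<and> open (W x) \<and> W x \<subseteq> X \<and> x \<in> W x \<and> W x \<subseteq> V \<inter> K"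
    by metis
  have "K - V' \<subseteq> \<Union>(W ` (K - V'))" using W by blast
  then obtain I where I: "I \<subseteq> K - V'" "finite I" "K - V' \<subseteq> \<Union>(W ` I)"
    using compactE_image[OF compact_rest, of "K - V'" W] W by blast
  have "\<And>x. x \<in> I \<Longrightarrow> W x \<in> compact_opens"
    using I W unfolding compact_opens_def by blast
  then have "\<Union>(W ` I) \<in> compact_opens"
    using I by (intro compact_opens_UN)
  moreover have "\<Union>(W ` I) \<subseteq> V \<inter> K" using I W by blast
  moreover have "K - \<Union>(W ` I) \<subseteq> V'" using I by blast
  ultimately show ?thesis by blast
qed

lemma content_le_sum_inner_content:
  "K \<in> compact_opens \<Longrightarrow> (\<And>i. open (V i)) \<Longrightarrow> K \<subseteq> (\<Union>i<(n::nat). V i) \<Longrightarrow> p K \<le> (\<Sum>i<n. inner_content (V i))"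
proof (induction n arbitrary: K)
  case 0
  then show ?case using p_empty by simp
next
  case (Suc n)
  have "K \<subseteq> V n \<union> (\<Union>i<n. V i)" using Suc.prems by (auto simp: lessThan_Suc)
  then obtain K1 where K1: "K1 \<in> compact_opens" "K1 \<subseteq> V n \<inter> K" "K - K1 \<subseteq> (\<Union>i<n. V i)"
    using compact_open_split[OF Suc.prems(1), of "V n" "\<Union>i<n. V i"] Suc.prems by auto
  have "K = K1 \<union> (K - K1)" using K1 by auto
  then have "p K = p K1 + p (K - K1)"
    using additive[of K1 "K - K1"] by auto
  also have "p K1 \<le> inner_content (V n)" using K1 by (intro inner_content_upper) auto
  also have "p (K - K1) \<le> (\<Sum>i<n. inner_content (V i))"
    using Suc.IH[OF compact_opens_Diff[OF Suc.prems(1) K1(1)]] Suc.prems K1 by auto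
  finally show ?case by simp
qed

lemma ennreal_inner_content_least:
  "(\<And>K. K \<in> compact_opens \<Longrightarrow> K \<subseteq> V \<Longrightarrow> ennreal (p K) \<le> c) \<Longrightarrow> ennreal (inner_content V) \<le> c"
proof (cases c)
  case (real r)
  assume "\<And>K. K \<in> compact_opens \<Longrightarrow> K \<subseteq> V \<Longrightarrow> ennreal (p K) \<le> c"
  then have "inner_content V \<le> r" by (intro inner_content_least) (use real nonneg in auto)
  then show ?thesis using real by simp
qed simp

lemma inner_content_countably_subadditive:
  assumes V: "\<And>i::nat. open (V i)"
  shows "ennreal (inner_content (\<Union>i. V i)) \<le> (\<Sum>i. ennreal (inner_content (V i)))"
proof (rule ennreal_inner_content_least)
  fix K assume K: "K \<in> compact_opens" "K \<subseteq> (\<Union>i. V i)"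
  then have "compact K" by (simp add: compact_opens_def)
  then obtain I where I: "finite I" "K \<subseteq> \<Union>(V ` I)"
    using compactE_image[of K UNIV V] K V by auto
  define n where "n = Suc (Max (insert 0 I))"
  have "\<forall>i\<in>I. i < n" using I by (auto simp: n_def less_Suc_eq_le)
  then have "K \<subseteq> (\<Union>i<n. V i)" using I by blast
  then have "p K \<le> (\<Sum>i<n. inner_content (V i))"
    using content_le_sum_inner_content[OF K(1) V] by auto
  then have "ennreal (p K) \<le> ennreal (\<Sum>i<n. inner_content (V i))" by (rule ennreal_leI)
  also have "\<dots> = (\<Sum>i<n. ennreal (inner_content (V i)))"
    by (rule sum_ennreal[symmetric]) (simp add: inner_content_nonneg)
  also have "\<dots> \<le> (\<Sum>i. ennreal (inner_content (V i)))"
    by (rule sum_le_suminf) auto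
  finally show "ennreal (p K) \<le> (\<Sum>i. ennreal (inner_content (V i)))" .
qed

lemma bdd_below_inner_content: "bdd_below (inner_content ` {V. open V \<and> E \<subseteq> V})"
  by (rule bdd_belowI[of _ 0]) (auto intro: inner_content_nonneg)

lemma outer_content_lower: "open V \<Longrightarrow> E \<subseteq> V \<Longrightarrow> outer_content E \<le> inner_content V"
  unfolding outer_content_def by (rule cInf_lower) (auto intro: bdd_below_inner_content)

lemma outer_content_greatest: "(\<And>V. open V \<Longrightarrow> E \<subseteq> V \<Longrightarrow> c \<le> inner_content V) \<Longrightarrow> c \<le> outer_content E"
  unfolding outer_content_def by (rule cInf_greatest) auto

lemma outer_content_nonneg: "0 \<le> outer_content E"
  by (rule outer_content_greatest) (rule inner_content_nonneg)

lemma outer_content_mono: "E \<subseteq> E' \<Longrightarrow> outer_content E \<le> outer_content E'"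
  by (rule outer_content_greatest) (rule outer_content_lower, auto)

lemma outer_content_open: "open V \<Longrightarrow> outer_content V = inner_content V"
  by (meson antisym inner_content_mono outer_content_greatest outer_content_lower order_refl)

lemma outer_content_approx:
  assumes "e > 0"
  shows "\<exists>V. open V \<and> E \<subseteq> V \<and> inner_content V < outer_content E + e"
proof -
  have "Inf (inner_content ` {V. open V \<and> E \<subseteq> V}) < outer_content E + e"
    using assms by (simp add: outer_content_def)
  then obtain V where "open V" "E \<subseteq> V" "inner_content V < outer_content E + e"
    using cInf_lessD[of "inner_content ` {V. open V \<and> E \<subseteq> V}"] by blast
  then show ?thesis by auto
qed

lemma outer_content_countably_subadditive:
  "ennreal (outer_content (\<Union>i. E i)) \<le> (\<Sum>i. ennreal (outer_content (E i)))"
proof (rule ennreal_le_epsilon)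
  fix e :: real assume e: "0 < e"
  have "\<forall>i. \<exists>V. open V \<and> E i \<subseteq> V \<and> inner_content V < outer_content (E i) + e / 2 ^ Suc i"
    using outer_content_approx e by simp
  then obtain V where
    V: "\<And>i. open (V i) \<and> E i \<subseteq> V i \<and> inner_content (V i) < outer_content (E i) + e / 2 ^ Suc i"
    by metis
  have "ennreal (outer_content (\<Union>i. E i)) \<le> ennreal (inner_content (\<Union>i. V i))"
    using V by (intro ennreal_leI outer_content_lower) auto
  also have "\<dots> \<le> (\<Sum>i. ennreal (inner_content (V i)))"
    using inner_content_countably_subadditive V by blast
  also have "\<dots> \<le> (\<Sum>i. ennreal (outer_content (E i)) + ennreal (e / 2 ^ Suc i))"
  proof (intro suminf_le)
    fix i
    have "ennreal (inner_content (V i)) \<le> ennreal (outer_content (E i) + e / 2 ^ Suc i)"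
      using V[of i] by (intro ennreal_leI) simp
    also have "\<dots> = ennreal (outer_content (E i)) + ennreal (e / 2 ^ Suc i)"
      using outer_content_nonneg e by (intro ennreal_plus) auto
    finally show "ennreal (inner_content (V i)) \<le> ennreal (outer_content (E i)) + ennreal (e / 2 ^ Suc i)" .
  qed auto
  also have "\<dots> = (\<Sum>i. ennreal (outer_content (E i))) + (\<Sum>i. ennreal (e / 2 ^ Suc i))"
    by (rule suminf_add[symmetric]) auto
  also have "(\<Sum>i. ennreal (e / 2 ^ Suc i)) = ennreal e"
  proof (rule suminf_ennreal_eq)
    show "(\<lambda>i. e / 2 ^ Suc i) sums e"
      using power_half_series sums_mult[of "\<lambda>n. (1/2::real) ^ Suc n" 1 e] by (simp add: power_divide)
  qed (use e in auto)
  finally show "ennreal (outer_content (\<Union>i. E i)) \<le> (\<Sum>i. ennreal (outer_content (E i))) + ennreal e" .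
qed

lemma outer_content_split_open:
  assumes S: "open S"
  shows "outer_content (E \<inter> S) + outer_content (E - S) \<le> outer_content E"
proof (rule field_le_epsilon)
  fix e :: real assume "0 < e"
  then have e: "e / 3 > 0" by simp
  obtain U where U: "open U" "E \<subseteq> U" "inner_content U < outer_content E + e / 3"
    using outer_content_approx[OF e] by blast
  obtain K where K: "K \<in> compact_opens" "K \<subseteq> U \<inter> S" "inner_content (U \<inter> S) < p K + e / 3"
    using inner_content_approx[OF e] by blast
  obtain K' where K': "K' \<in> compact_opens" "K' \<subseteq> U - K" "inner_content (U - K) < p K' + e / 3"
    using inner_content_approx[OF e] by blast
  have "open (U - K)"
    using U K by (auto simp: compact_opens_def compact_imp_closed)
  then have "outer_content (E \<inter> S) + outer_content (E - S) \<le> inner_content (U \<inter> S) + inner_content (U - K)"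
    using U S K by (intro add_mono outer_content_lower) auto
  moreover have "p K + p K' = p (K \<union> K')"
    using K' by (intro additive[symmetric]) auto
  moreover have "p (K \<union> K') \<le> inner_content U"
    using K K' by (intro inner_content_upper compact_opens_Un) auto
  ultimately show "outer_content (E \<inter> S) + outer_content (E - S) \<le> outer_content E + e"
    using K K' U by linarith
qed

lemma outer_measure_space_outer_content:
  "outer_measure_space (Pow X) (\<lambda>E. ennreal (outer_content E))"
  unfolding outer_measure_space_def
proof (intro conjI)
  show "positive (Pow X) (\<lambda>E. ennreal (outer_content E))"
    unfolding positive_def
    using outer_content_lower[of "{}" "{}"] inner_content_empty outer_content_nonneg[of "{}"] by simp
  show "increasing (Pow X) (\<lambda>E. ennreal (outer_content E))"
    unfolding increasing_def by (auto intro!: ennreal_leI outer_content_mono)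
  show "countably_subadditive (Pow X) (\<lambda>E. ennreal (outer_content E))"
    unfolding countably_subadditive_def using outer_content_countably_subadditive by blast
qed

lemma open_in_lambda_system:
  assumes "open S"
  shows "X \<inter> S \<in> lambda_system X (Pow X) (\<lambda>E. ennreal (outer_content E))"
  unfolding lambda_system_def
proof safe
  fix E assume E: "E \<subseteq> X"
  have ennreal_sum: "ennreal (outer_content (E \<inter> S)) + ennreal (outer_content (E - S))
      = ennreal (outer_content (E \<inter> S) + outer_content (E - S))"
    by (rule ennreal_plus[symmetric]) (rule outer_content_nonneg)+
  have "subadditive (Pow X) (\<lambda>E. ennreal (outer_content E))"
    using outer_measure_space_outer_content sigma_algebra_Pow[of X]
    by (intro ring_of_sets.countably_subadditive_subadditive)
       (auto simp: outer_measure_space_def sigma_algebra_def algebra_def)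
  moreover have "E = (E \<inter> S) \<union> (E - S)" by auto
  ultimately have "ennreal (outer_content E) \<le> ennreal (outer_content (E \<inter> S)) + ennreal (outer_content (E - S))"
    using subadditiveD[of "Pow X" _ "E \<inter> S" "E - S"] E by auto
  then have "ennreal (outer_content E) \<le> ennreal (outer_content (E \<inter> S) + outer_content (E - S))"
    by (simp only: ennreal_sum)
  then have "outer_content E \<le> outer_content (E \<inter> S) + outer_content (E - S)"
    using ennreal_le_iff[OF add_nonneg_nonneg[OF outer_content_nonneg outer_content_nonneg]] by blast
  then have "outer_content (E \<inter> S) + outer_content (E - S) = outer_content E"
    using outer_content_split_open[OF assms, of E] by simp
  moreover have "X \<inter> S \<inter> E = E \<inter> S" "(X - X \<inter> S) \<inter> E = E - S" using E by auto
  ultimately show "ennreal (outer_content (X \<inter> S \<inter> E)) + ennreal (outer_content ((X - X \<inter> S) \<inter> E))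
      = ennreal (outer_content E)"
    using ennreal_sum by simp
qed

lemma measure_space_outer_content:
  "measure_space X (sets (restrict_space borel X)) (\<lambda>E. ennreal (outer_content E))"
proof -
  let ?L = "lambda_system X (Pow X) (\<lambda>E. ennreal (outer_content E))"
  have L: "measure_space X ?L (\<lambda>E. ennreal (outer_content E))"
    by (rule sigma_algebra.caratheodory_lemma[OF sigma_algebra_Pow outer_measure_space_outer_content])
  then have "sigma_algebra X ?L" by (simp add: measure_space_def)
  then have "sets (restrict_space borel X) \<subseteq> ?L"
    unfolding sets_restrict_borel_eq_sigma_sets[OF open_space]
    by (rule sigma_algebra.sigma_sets_subset) (auto intro: open_in_lambda_system)
  moreover have "sigma_algebra X (sets (restrict_space borel X))"
    using sets.sigma_algebra_axioms[of "restrict_space borel X"] by (simp add: space_restrict_space)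
  ultimately show ?thesis by (intro measure_down[OF L])
qed

lemma exists_measure_extending_content:
  "\<exists>\<mu>. prob_space \<mu> \<and> space \<mu> = X \<and> sets \<mu> = sets (restrict_space borel X) \<and>
       (\<forall>V. open V \<longrightarrow> V \<subseteq> X \<longrightarrow> measure \<mu> V = inner_content V)"
proof -
  define B where "B = sets (restrict_space borel X)"
  define \<mu> where "\<mu> = measure_of X B (\<lambda>E. ennreal (outer_content E))"
  have B: "sigma_algebra X B"
    using sets.sigma_algebra_axioms[of "restrict_space borel X"] by (simp add: B_def space_restrict_space)
  then have "B \<subseteq> Pow X" by (simp add: sigma_algebra_iff2)
  then have space: "space \<mu> = X" and sets: "sets \<mu> = B"
    unfolding \<mu>_def using B by (simp_all add: space_measure_of sets_measure_of sigma_algebra.sigma_sets_eq)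
  have emeasure: "emeasure \<mu> E = ennreal (outer_content E)" if "E \<in> B" for E
    unfolding \<mu>_def using measure_space_outer_content that
    by (intro emeasure_measure_of_sigma) (auto simp: measure_space_def B_def)
  have open_in_B: "V \<in> B" if "open V" "V \<subseteq> X" for V
    using that unfolding B_def sets_restrict_borel_eq_sigma_sets[OF open_space]
    by (metis Int_absorb1 image_eqI mem_Collect_eq sigma_sets.Basic)
  have "emeasure \<mu> (space \<mu>) = 1"
    using emeasure[OF open_in_B[OF open_space order_refl]] space
      outer_content_open[OF open_space] inner_content_compact_open[OF compact_opens_space] total
    by simp
  then have "prob_space \<mu>" by (rule prob_spaceI)
  moreover have "measure \<mu> V = inner_content V" if "open V" "V \<subseteq> X" for V
    using emeasure[OF open_in_B[OF that]] outer_content_open[OF that(1)] outer_content_nonneg[of V]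
    by (simp add: measure_def)
  ultimately show ?thesis using space sets B_def by blast
qed

end

section \<open>Groupoids, multisections and normal sets\<close>

context
  fixes G :: "('a::topological_space, 'b) groupoid_scheme"
  assumes groupoid: "is_groupoid G"
begin

lemma gsrc_gsrc: "gsrc G (gsrc G g) = gsrc G g"
  and grng_gsrc: "grng G (gsrc G g) = gsrc G g"
  and gsrc_grng: "gsrc G (grng G g) = grng G g"
  using groupoid by (auto simp: is_groupoid_def)

lemma gsrc_gmul: "gsrc G g = grng G h \<Longrightarrow> gsrc G (gmul G g h) = gsrc G h"
  and grng_gmul: "gsrc G g = grng G h \<Longrightarrow> grng G (gmul G g h) = grng G g"
  using groupoid by (auto simp: is_groupoid_def)

lemma gmul_assoc:
  "gsrc G g = grng G h \<Longrightarrow> gsrc G h = grng G k \<Longrightarrow> gmul G (gmul G g h) k = gmul G g (gmul G h k)"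
  using groupoid by (auto simp: is_groupoid_def)

lemma gmul_grng_left: "gmul G (grng G g) g = g"
  using groupoid by (auto simp: is_groupoid_def)

lemma gsrc_ginv: "gsrc G (ginv G g) = grng G g"
  and grng_ginv: "grng G (ginv G g) = gsrc G g"
  and gmul_ginv_left: "gmul G (ginv G g) g = gsrc G g"
  using groupoid by (auto simp: is_groupoid_def)

lemma units_fixed: "u \<in> units G \<Longrightarrow> gsrc G u = u \<and> grng G u = u"
  by (auto simp: units_def gsrc_gsrc grng_gsrc)

lemma grng_in_units: "grng G g \<in> units G"
  and gsrc_in_units: "gsrc G g \<in> units G"
  unfolding units_def by (metis gsrc_grng rangeI)+

lemma gmul_left_cancel:
  assumes "gsrc G g = grng G h" "gsrc G g = grng G h'" "gmul G g h = gmul G g h'"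
  shows "h = h'"
proof -
  have "gmul G (ginv G g) (gmul G g k) = k" if "gsrc G g = grng G k" for k
    using that gmul_assoc[of "ginv G g" g k] by (simp add: gsrc_ginv gmul_ginv_left gmul_grng_left)
  then show ?thesis using assms by metis
qed

lemma gsrc_image_ginv: "gsrc G ` ginv G ` C = grng G ` C"
  and grng_image_ginv: "grng G ` ginv G ` C = gsrc G ` C"
  by (auto simp: image_image gsrc_ginv grng_ginv)

lemma inj_on_gsrc_ginv_image: "inj_on (grng G) C \<Longrightarrow> inj_on (gsrc G) (ginv G ` C)"
  and inj_on_grng_ginv_image: "inj_on (gsrc G) C \<Longrightarrow> inj_on (grng G) (ginv G ` C)"
  by (auto simp: inj_on_def gsrc_ginv grng_ginv)

lemma setmulE:
  assumes "x \<in> setmul G A B"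
  obtains a b where "a \<in> A" "b \<in> B" "gsrc G a = grng G b" "x = gmul G a b"
  using assms by (auto simp: setmul_def)

context
  fixes F C
  assumes multisection: "compact_open_multisection G F C"
begin

lemma multisection_mul: "i \<in> F \<Longrightarrow> j \<in> F \<Longrightarrow> k \<in> F \<Longrightarrow> setmul G (C i j) (C j k) = C i k"
  and multisection_level_units: "i \<in> F \<Longrightarrow> C i i \<subseteq> units G"
  and multisection_bisection: "i \<in> F \<Longrightarrow> j \<in> F \<Longrightarrow> bisection G (C i j)"
  and multisection_levels_disjoint: "i \<in> F \<Longrightarrow> j \<in> F \<Longrightarrow> i \<noteq> j \<Longrightarrow> C i i \<inter> C j j = {}"
  using multisection by (simp_all add: compact_open_multisection_def)

lemma multisection_gsrc:
  assumes "i \<in> F" "j \<in> F" "x \<in> C i j"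
  shows "gsrc G x \<in> C j j"
proof -
  have "x \<in> setmul G (C i j) (C j j)" using multisection_mul[of i j j] assms by simp
  then show ?thesis
    by (rule setmulE) (use gsrc_gmul units_fixed multisection_level_units assms in \<open>metis subsetD\<close>)
qed

lemma multisection_grng:
  assumes "i \<in> F" "j \<in> F" "x \<in> C i j"
  shows "grng G x \<in> C i i"
proof -
  have "x \<in> setmul G (C i i) (C i j)" using multisection_mul[of i i j] assms by simp
  then show ?thesis
    by (rule setmulE) (use grng_gmul units_fixed multisection_level_units assms in \<open>metis subsetD\<close>)
qed

lemma multisection_gsrc_surj:
  assumes "i \<in> F" "j \<in> F" "v \<in> C j j"
  shows "\<exists>x \<in> C i j. gsrc G x = v"
proof -
  have "v \<in> setmul G (C j i) (C i j)" using multisection_mul[of j i j] assms by simp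
  moreover have "gsrc G v = v" using units_fixed multisection_level_units assms by blast
  ultimately show ?thesis by (metis gsrc_gmul setmulE)
qed

lemma multisection_grng_surj:
  assumes "i \<in> F" "j \<in> F" "v \<in> C i i"
  shows "\<exists>x \<in> C i j. grng G x = v"
proof -
  have "v \<in> setmul G (C i j) (C j i)" using multisection_mul[of i j i] assms by simp
  moreover have "grng G v = v" using units_fixed multisection_level_units assms by blast
  ultimately show ?thesis by (metis grng_gmul setmulE)
qed

lemma multisection_fibre_singleton:
  assumes "i \<in> F" "j \<in> F" "u \<in> C j j"
  obtains x where "fibre G (C i j) u = {x}"
proof -
  obtain x where x: "x \<in> C i j" "gsrc G x = u"
    using multisection_gsrc_surj[OF assms] by blast
  have "inj_on (gsrc G) (C i j)"
    using multisection_bisection[OF assms(1,2)] by (simp add: bisection_def)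
  then have "fibre G (C i j) u = {x}" using x by (auto simp: fibre_def inj_on_def)
  then show ?thesis by (rule that)
qed

lemma multisection_fibres_disjoint:
  assumes "j \<in> F"
  shows "disjoint_family_on (\<lambda>i. fibre G (C i j) u) F"
  unfolding disjoint_family_on_def
proof (intro ballI impI)
  fix i i' assume i: "i \<in> F" "i' \<in> F" "i \<noteq> i'"
  have "grng G x \<in> C i i \<inter> C i' i'" if "x \<in> C i j" "x \<in> C i' j" for x
    using multisection_grng i assms that by blast
  then show "fibre G (C i j) u \<inter> fibre G (C i' j) u = {}"
    using multisection_levels_disjoint[OF i] by (auto simp: fibre_def)
qed

end

end

context
  fixes G :: "('a::topological_space, 'b) groupoid_scheme"
  assumes groupoid: "is_groupoid G"
begin

context
  fixes D :: "'a normal_data"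
  assumes normal: "normal_set G D"
begin

lemma normal_set_multisection: "l \<in> {1..nd_m D} \<Longrightarrow> compact_open_multisection G (nd_F D l) (nd_C D l)"
  and normal_set_base_index: "l \<in> {1..nd_m D} \<Longrightarrow> nd_i D l \<in> nd_F D l"
  and normal_set_bases_cover: "units G = (\<Union>l\<in>{1..nd_m D}. nd_C D l (nd_i D l) (nd_i D l))"
  and normal_set_bases_disjoint: "disjoint_family_on (\<lambda>l. nd_C D l (nd_i D l) (nd_i D l)) {1..nd_m D}"
  using normal by (simp_all add: normal_set_def disjoint_family_on_def)

lemma finite_normal_set_index: "l \<in> {1..nd_m D} \<Longrightarrow> finite (nd_F D l)"
  using normal_set_multisection by (simp add: compact_open_multisection_def)

lemma finite_fibre_nd_set: "finite (fibre G (nd_set D) u)"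
proof -
  have "fibre G (nd_set D) u \<subseteq> (\<Union>l\<in>{1..nd_m D}. \<Union>i\<in>nd_F D l. gsrc G -` {u} \<inter> nd_C D l i (nd_i D l))"
    by (auto simp: fibre_def nd_set_def)
  moreover have "finite (gsrc G -` {u} \<inter> nd_C D l i (nd_i D l))"
    if "l \<in> {1..nd_m D}" "i \<in> nd_F D l" for l i
    using multisection_bisection[OF groupoid normal_set_multisection[OF that(1)] that(2)
        normal_set_base_index[OF that(1)]]
    by (intro finite_vimage_IntI) (auto simp: bisection_def)
  ultimately show ?thesis
    using finite_normal_set_index by (metis (no_types, lifting) finite_UN_I finite_atLeastAtMost finite_subset)
qed

lemma unit_in_fibre_nd_set: "u \<in> units G \<Longrightarrow> u \<in> fibre G (nd_set D) u"
proof -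
  assume u: "u \<in> units G"
  then obtain l where "l \<in> {1..nd_m D}" "u \<in> nd_C D l (nd_i D l) (nd_i D l)"
    using normal_set_bases_cover by blast
  then have "u \<in> nd_set D" using normal_set_base_index unfolding nd_set_def by blast
  then show ?thesis using units_fixed[OF groupoid u] by (simp add: fibre_def)
qed

lemma card_fibre_nd_set_pos: "u \<in> units G \<Longrightarrow> 0 < card (fibre G (nd_set D) u)"
  using unit_in_fibre_nd_set finite_fibre_nd_set card_gt_0_iff by blast

lemma height_pos: "0 < height D"
proof -
  have "gsrc G g \<in> (\<Union>l\<in>{1..nd_m D}. nd_C D l (nd_i D l) (nd_i D l))" for g
    using normal_set_bases_cover gsrc_in_units[OF groupoid] by simp
  then have "{1..nd_m D} \<noteq> {}" by blast
  then have "height D \<in> (\<lambda>l. card (nd_F D l)) ` {1..nd_m D}"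
    unfolding height_def by (intro Min_in) auto
  then show ?thesis
    using finite_normal_set_index normal_set_base_index by (force simp: card_gt_0_iff)
qed

text \<open>Call C l i (i l) the i-th column of the l-th multisection. Over a point u of its base,
  the fibre of the normal set meets every column in exactly one arrow.\<close>

lemma fibre_nd_set_eq_UN:
  assumes l: "l \<in> {1..nd_m D}" and u: "u \<in> nd_C D l (nd_i D l) (nd_i D l)"
  shows "fibre G (nd_set D) u = (\<Union>i\<in>nd_F D l. fibre G (nd_C D l i (nd_i D l)) u)"
proof
  show "(\<Union>i\<in>nd_F D l. fibre G (nd_C D l i (nd_i D l)) u) \<subseteq> fibre G (nd_set D) u"
    using l by (auto simp: fibre_def nd_set_def)
  show "fibre G (nd_set D) u \<subseteq> (\<Union>i\<in>nd_F D l. fibre G (nd_C D l i (nd_i D l)) u)"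
  proof
    fix x assume "x \<in> fibre G (nd_set D) u"
    then obtain l' i where l': "l' \<in> {1..nd_m D}" "i \<in> nd_F D l'"
      and x: "x \<in> nd_C D l' i (nd_i D l')" "gsrc G x = u"
      by (auto simp: fibre_def nd_set_def)
    have "u \<in> nd_C D l' (nd_i D l') (nd_i D l')"
      using multisection_gsrc[OF groupoid normal_set_multisection[OF l'(1)] l'(2)
          normal_set_base_index[OF l'(1)] x(1)] x(2) by simp
    then have "l' = l"
      using normal_set_bases_disjoint l l' u unfolding disjoint_family_on_def by blast
    then show "x \<in> (\<Union>i\<in>nd_F D l. fibre G (nd_C D l i (nd_i D l)) u)"
      using l' x by (auto simp: fibre_def)
  qed
qed

lemma sum_fibre_nd_set:
  assumes l: "l \<in> {1..nd_m D}" and u: "u \<in> nd_C D l (nd_i D l) (nd_i D l)"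
  shows "(\<Sum>\<gamma>\<in>fibre G (nd_set D) u. g \<gamma>)
       = (\<Sum>i\<in>nd_F D l. \<Sum>\<gamma>\<in>fibre G (nd_C D l i (nd_i D l)) u. g \<gamma>)"
proof -
  note multisection = normal_set_multisection[OF l] and base = normal_set_base_index[OF l]
  have "finite (fibre G (nd_C D l i (nd_i D l)) u)" if "i \<in> nd_F D l" for i
    using multisection_fibre_singleton[OF groupoid multisection that base u] by (metis finite.simps)
  then show ?thesis
    unfolding fibre_nd_set_eq_UN[OF l u]
    by (intro sum.UNION_disjoint_family finite_normal_set_index[OF l]
        multisection_fibres_disjoint[OF groupoid multisection base] ballI)
qed

lemma card_fibre_nd_set:
  assumes l: "l \<in> {1..nd_m D}" and u: "u \<in> nd_C D l (nd_i D l) (nd_i D l)"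
  shows "card (fibre G (nd_set D) u) = card (nd_F D l)"
proof -
  have "card (fibre G (nd_set D) u) = (\<Sum>i\<in>nd_F D l. card (fibre G (nd_C D l i (nd_i D l)) u))"
    using sum_fibre_nd_set[OF l u, of "\<lambda>_. 1::nat"] by simp
  also have "\<dots> = (\<Sum>i\<in>nd_F D l. 1)"
    by (rule sum.cong[OF refl]) (metis is_singletonI is_singleton_altdef multisection_fibre_singleton[OF groupoid
          normal_set_multisection[OF l] _ normal_set_base_index[OF l] u])
  finally show ?thesis by simp
qed

lemma sum_indicator_fibre_nd_set:
  assumes l: "l \<in> {1..nd_m D}" and u: "u \<in> nd_C D l (nd_i D l) (nd_i D l)"
  shows "(\<Sum>\<gamma>\<in>fibre G (nd_set D) u. indicator A (grng G \<gamma>) :: real)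
       = (\<Sum>i\<in>nd_F D l. indicator (gsrc G ` (nd_C D l i (nd_i D l) \<inter> grng G -` A)) u)"
  unfolding sum_fibre_nd_set[OF l u]
proof (rule sum.cong[OF refl])
  fix i assume i: "i \<in> nd_F D l"
  obtain x where x: "fibre G (nd_C D l i (nd_i D l)) u = {x}"
    using multisection_fibre_singleton[OF groupoid normal_set_multisection[OF l] i
        normal_set_base_index[OF l] u] .
  then have "u \<in> gsrc G ` (nd_C D l i (nd_i D l) \<inter> grng G -` A) \<longleftrightarrow> grng G x \<in> A"
    unfolding fibre_def by (auto simp: set_eq_iff)
  then show "(\<Sum>\<gamma>\<in>fibre G (nd_C D l i (nd_i D l)) u. indicator A (grng G \<gamma>))
      = indicator (gsrc G ` (nd_C D l i (nd_i D l) \<inter> grng G -` A)) u"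
    using x by (simp add: indicator_def)
qed

end

end

section \<open>Densities and the Folner condition\<close>

lemma dens_avg_eq_card:
  "finite (fibre G (nd_set D) u) \<Longrightarrow>
   dens_avg G D Q u = real (card {\<gamma> \<in> fibre G (nd_set D) u. grng G \<gamma> \<in> Q}) / real (card (fibre G (nd_set D) u))"
  by (simp add: dens_avg_def indicator_def sum.If_cases Int_def conj_commute)

lemma dens_avg_nonneg: "finite (fibre G (nd_set D) u) \<Longrightarrow> 0 \<le> dens_avg G D Q u"
  by (simp add: dens_avg_eq_card)

lemma dens_avg_le_1:
  assumes "finite (fibre G (nd_set D) u)"
  shows "dens_avg G D Q u \<le> 1"
proof -
  have "card {\<gamma> \<in> fibre G (nd_set D) u. grng G \<gamma> \<in> Q} \<le> card (fibre G (nd_set D) u)"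
    by (rule card_mono[OF assms]) auto
  then show ?thesis
    unfolding dens_avg_eq_card[OF assms] by (auto simp: divide_le_eq_1)
qed

lemma dens_avg_Un:
  "K \<inter> K' = {} \<Longrightarrow> dens_avg G D (K \<union> K') u = dens_avg G D K u + dens_avg G D K' u"
  by (simp add: dens_avg_def indicator_disj_union sum.distrib add_divide_distrib)

definition folner_ratio :: "('a, 'b) groupoid_scheme \<Rightarrow> 'a set \<Rightarrow> 'a normal_data \<Rightarrow> 'a \<Rightarrow> real" where
  "folner_ratio G K D u = real (card (fibre G (setmul G K (nd_set D)) u - fibre G (nd_set D) u))
                          / real (card (fibre G (nd_set D) u))"

context
  fixes G :: "('a::topological_space, 'b) groupoid_scheme"
  assumes groupoid: "is_groupoid G"
begin

lemma inj_on_gmul_bisection: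
  assumes inj: "inj_on (grng G) K" and \<kappa>: "\<And>\<gamma>. \<gamma> \<in> P \<Longrightarrow> \<kappa> \<gamma> \<in> K \<and> gsrc G (\<kappa> \<gamma>) = grng G \<gamma>"
  shows "inj_on (\<lambda>\<gamma>. gmul G (\<kappa> \<gamma>) \<gamma>) P"
proof (rule inj_onI)
  fix \<gamma> \<gamma>' assume \<gamma>: "\<gamma> \<in> P" "\<gamma>' \<in> P" and eq: "gmul G (\<kappa> \<gamma>) \<gamma> = gmul G (\<kappa> \<gamma>') \<gamma>'"
  have "grng G (\<kappa> \<gamma>) = grng G (\<kappa> \<gamma>')"
    using grng_gmul[OF groupoid] \<kappa>[OF \<gamma>(1)] \<kappa>[OF \<gamma>(2)] eq by metis
  then have "\<kappa> \<gamma> = \<kappa> \<gamma>'" using inj \<kappa> \<gamma> by (auto dest: inj_onD)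
  then show "\<gamma> = \<gamma>'"
    using gmul_left_cancel[OF groupoid] \<kappa>[OF \<gamma>(1)] \<kappa>[OF \<gamma>(2)] eq by metis
qed

lemma image_gmul_bisection:
  assumes inj: "inj_on (gsrc G) K"
    and \<kappa>: "\<And>\<gamma>. \<gamma> \<in> fibre G T u \<Longrightarrow> grng G \<gamma> \<in> gsrc G ` K \<Longrightarrow> \<kappa> \<gamma> \<in> K \<and> gsrc G (\<kappa> \<gamma>) = grng G \<gamma>"
  shows "(\<lambda>\<gamma>. gmul G (\<kappa> \<gamma>) \<gamma>) ` {\<gamma> \<in> fibre G T u. grng G \<gamma> \<in> gsrc G ` K} = fibre G (setmul G K T) u"
proof
  show "(\<lambda>\<gamma>. gmul G (\<kappa> \<gamma>) \<gamma>) ` {\<gamma> \<in> fibre G T u. grng G \<gamma> \<in> gsrc G ` K} \<subseteq> fibre G (setmul G K T) u"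
    using \<kappa> gsrc_gmul[OF groupoid] by (fastforce simp: fibre_def setmul_def)
  show "fibre G (setmul G K T) u \<subseteq> (\<lambda>\<gamma>. gmul G (\<kappa> \<gamma>) \<gamma>) ` {\<gamma> \<in> fibre G T u. grng G \<gamma> \<in> gsrc G ` K}"
  proof
    fix x assume "x \<in> fibre G (setmul G K T) u"
    then obtain k \<gamma> where k: "k \<in> K" "\<gamma> \<in> T" "gsrc G k = grng G \<gamma>" "x = gmul G k \<gamma>" "gsrc G x = u"
      by (auto simp: fibre_def setmul_def)
    then have \<gamma>: "\<gamma> \<in> fibre G T u" "grng G \<gamma> \<in> gsrc G ` K"
      using gsrc_gmul[OF groupoid] image_eqI[where f = "gsrc G", OF k(3)[symmetric] k(1)] by (auto simp: fibre_def)
    then have "\<kappa> \<gamma> = k" using \<kappa>[OF \<gamma>] k(1,3) inj_onD[OF inj] by metis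
    then show "x \<in> (\<lambda>\<gamma>. gmul G (\<kappa> \<gamma>) \<gamma>) ` {\<gamma> \<in> fibre G T u. grng G \<gamma> \<in> gsrc G ` K}"
      using \<gamma> k by blast
  qed
qed

lemma bij_betw_fibre_setmul:
  assumes "inj_on (gsrc G) K" "inj_on (grng G) K"
  obtains f where "bij_betw f {\<gamma> \<in> fibre G T u. grng G \<gamma> \<in> gsrc G ` K} (fibre G (setmul G K T) u)"
proof -
  define \<kappa> where "\<kappa> \<gamma> = (SOME k. k \<in> K \<and> gsrc G k = grng G \<gamma>)" for \<gamma>
  have \<kappa>: "\<kappa> \<gamma> \<in> K \<and> gsrc G (\<kappa> \<gamma>) = grng G \<gamma>" if \<gamma>: "grng G \<gamma> \<in> gsrc G ` K" for \<gamma>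
  proof -
    from \<gamma> obtain k where "k \<in> K" "grng G \<gamma> = gsrc G k" by (rule imageE)
    then show ?thesis
      unfolding \<kappa>_def by (intro someI[where P = "\<lambda>k. k \<in> K \<and> gsrc G k = grng G \<gamma>"]) simp
  qed
  show ?thesis
    by (rule that, rule bij_betw_imageI[OF inj_on_gmul_bisection[OF assms(2)] image_gmul_bisection[OF assms(1)]])
       (use \<kappa> in auto)
qed

lemma card_fibre_setmul:
  assumes "inj_on (gsrc G) K" "inj_on (grng G) K"
  shows "card (fibre G (setmul G K T) u) = card {\<gamma> \<in> fibre G T u. grng G \<gamma> \<in> gsrc G ` K}"
proof -
  obtain f where "bij_betw f {\<gamma> \<in> fibre G T u. grng G \<gamma> \<in> gsrc G ` K} (fibre G (setmul G K T) u)"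
    using bij_betw_fibre_setmul[OF assms] .
  then show ?thesis by (simp add: bij_betw_same_card)
qed

lemma finite_fibre_setmul:
  assumes "finite (fibre G T u)" "inj_on (gsrc G) K" "inj_on (grng G) K"
  shows "finite (fibre G (setmul G K T) u)"
proof -
  obtain f where "bij_betw f {\<gamma> \<in> fibre G T u. grng G \<gamma> \<in> gsrc G ` K} (fibre G (setmul G K T) u)"
    using bij_betw_fibre_setmul[OF assms(2,3)] .
  moreover have "finite {\<gamma> \<in> fibre G T u. grng G \<gamma> \<in> gsrc G ` K}" using assms(1) by simp
  ultimately show ?thesis by (simp add: bij_betw_finite)
qed

lemma card_fibre_setmul_le:
  assumes "finite (fibre G T u)" "inj_on (gsrc G) K" "inj_on (grng G) K"
  shows "card (fibre G (setmul G K T) u) \<le> card (fibre G T u)"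
  unfolding card_fibre_setmul[OF assms(2,3)] by (rule card_mono[OF assms(1)]) auto

lemma card_fibre_gsrc_image_le:
  assumes fin: "finite (fibre G T u)" and inj: "inj_on (gsrc G) K" "inj_on (grng G) K"
  shows "card {\<gamma> \<in> fibre G T u. grng G \<gamma> \<in> gsrc G ` K}
      \<le> card {\<gamma> \<in> fibre G T u. grng G \<gamma> \<in> grng G ` K} + card (fibre G (setmul G K T) u - fibre G T u)"
proof -
  have "fibre G (setmul G K T) u \<inter> fibre G T u \<subseteq> {\<gamma> \<in> fibre G T u. grng G \<gamma> \<in> grng G ` K}"
    using grng_gmul[OF groupoid] by (auto simp: fibre_def setmul_def)
  then have "card (fibre G (setmul G K T) u \<inter> fibre G T u) \<le> card {\<gamma> \<in> fibre G T u. grng G \<gamma> \<in> grng G ` K}"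
    by (rule card_mono[rotated]) (use fin in simp)
  then show ?thesis
    using card_fibre_setmul[OF inj, of T u] card_Int_Diff[OF finite_fibre_setmul[OF assms], of "fibre G T u"]
    by linarith
qed

end

lemma folner_ratio_le_1:
  assumes groupoid: "is_groupoid G" and normal: "normal_set G D" and u: "u \<in> units G"
    and inj: "inj_on (gsrc G) K" "inj_on (grng G) K"
  shows "folner_ratio G K D u \<le> 1"
proof -
  note fin = finite_fibre_nd_set[OF groupoid normal]
  have "card (fibre G (setmul G K (nd_set D)) u - fibre G (nd_set D) u) \<le> card (fibre G (nd_set D) u)"
    using card_Diff_subset_Int finite_fibre_setmul[OF groupoid fin inj]
      card_fibre_setmul_le[OF groupoid fin inj] card_mono
    by (metis Diff_subset order_trans)
  then show ?thesis
    using card_fibre_nd_set_pos[OF groupoid normal u] by (simp add: folner_ratio_def divide_le_eq_1)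
qed

lemma dens_avg_gsrc_image_le:
  assumes groupoid: "is_groupoid G" and normal: "normal_set G D" and u: "u \<in> units G"
    and inj: "inj_on (gsrc G) K" "inj_on (grng G) K"
  shows "dens_avg G D (gsrc G ` K) u \<le> dens_avg G D (grng G ` K) u + folner_ratio G K D u"
proof -
  note fin = finite_fibre_nd_set[OF groupoid normal]
  have "real (card {\<gamma> \<in> fibre G (nd_set D) u. grng G \<gamma> \<in> gsrc G ` K})
     \<le> real (card {\<gamma> \<in> fibre G (nd_set D) u. grng G \<gamma> \<in> grng G ` K})
       + real (card (fibre G (setmul G K (nd_set D)) u - fibre G (nd_set D) u))"
    using card_fibre_gsrc_image_le[OF groupoid fin[of u] inj] by linarith
  then show ?thesis
    unfolding dens_avg_eq_card[OF fin] folner_ratio_def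
    using card_fibre_nd_set_pos[OF groupoid normal u]
    by (simp add: divide_right_mono add_divide_distrib[symmetric])
qed

lemma dens_avg_units:
  assumes groupoid: "is_groupoid G" and normal: "normal_set G D" and u: "u \<in> units G"
  shows "dens_avg G D (units G) u = 1"
proof -
  have "{\<gamma> \<in> fibre G (nd_set D) u. grng G \<gamma> \<in> units G} = fibre G (nd_set D) u"
    using grng_in_units[OF groupoid] by auto
  then show ?thesis
    unfolding dens_avg_eq_card[OF finite_fibre_nd_set[OF groupoid normal]]
    using card_fibre_nd_set_pos[OF groupoid normal u] by simp
qed

section \<open>Invariant measures on ample groupoids\<close>

lemma inv_measure_prob_space: "\<mu> \<in> inv_measures G \<Longrightarrow> prob_space \<mu>"
  and inv_measure_space: "\<mu> \<in> inv_measures G \<Longrightarrow> space \<mu> = units G"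
  by (simp_all add: inv_measures_def)

lemma open_in_sets_inv_measure:
  assumes "\<mu> \<in> inv_measures G" "open V" "V \<subseteq> units G"
  shows "V \<in> sets \<mu>"
proof -
  have "units G \<inter> V \<in> sets \<mu>"
    using assms by (auto simp: inv_measures_def sets_restrict_space)
  then show ?thesis using assms(3) by (simp add: Int_absorb1)
qed

lemma inv_measure_ge_inf_measure:
  "\<mu> \<in> inv_measures G \<Longrightarrow> inf_measure G U \<le> ereal (measure \<mu> U)"
  unfolding inf_measure_def by (rule INF_lower)

lemma measure_gsrc_eq_grng:
  assumes "\<mu> \<in> inv_measures G" "bisection G B"
  shows "measure \<mu> (gsrc G ` B) = measure \<mu> (grng G ` B)"
  using assms by (simp add: inv_measures_def measure_def)

lemma local_homeo_imp_open_map: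
  assumes "local_homeo f" and "open W"
  shows "open (f ` W)"
proof -
  have "\<exists>V. open V \<and> f x \<in> V \<and> V \<subseteq> f ` W" if x: "x \<in> W" for x
  proof -
    obtain U g where U: "open U" "x \<in> U" "open (f ` U)" "homeomorphism U (f ` U) f g"
      using assms(1) unfolding local_homeo_def by blast
    have "openin (top_of_set U) (W \<inter> U)" using assms(2) by (auto simp: openin_open)
    then have "openin (top_of_set (f ` U)) (f ` (W \<inter> U))"
      by (rule homeomorphism_imp_open_map[OF U(4)])
    then have "open (f ` (W \<inter> U))" using U(3) by (rule openin_open_trans)
    then show ?thesis using x U by blast
  qed
  then show ?thesis by (subst open_subopen) blast
qed

context
  fixes G :: "('a::t2_space, 'b) groupoid_scheme"
  assumes ample: "ample_groupoid G"
begin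

lemma ample_is_groupoid: "is_groupoid G"
  and continuous_gsrc: "continuous_on UNIV (gsrc G)"
  and continuous_grng: "continuous_on UNIV (grng G)"
  and continuous_ginv: "continuous_on UNIV (ginv G)"
  and compact_units: "compact (units G)"
  and compact_bisection_basis: "open U \<Longrightarrow> x \<in> U \<Longrightarrow> \<exists>B. bisection G B \<and> compact B \<and> x \<in> B \<and> B \<subseteq> U"
  using ample by (simp_all add: ample_groupoid_def)

lemma open_gsrc_image: "open W \<Longrightarrow> open (gsrc G ` W)"
  and open_grng_image: "open W \<Longrightarrow> open (grng G ` W)"
  using ample by (simp_all add: ample_groupoid_def local_homeo_imp_open_map)

lemma open_units: "open (units G)"
  unfolding units_def by (rule open_gsrc_image) simp

lemma units_compact_open_basis:
  assumes "open U" "x \<in> U" "x \<in> units G"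
  shows "\<exists>K. compact K \<and> open K \<and> K \<subseteq> units G \<and> x \<in> K \<and> K \<subseteq> U"
proof -
  obtain B where "bisection G B" "compact B" "x \<in> B" "B \<subseteq> U \<inter> units G"
    using compact_bisection_basis[of "U \<inter> units G" x] open_units assms by blast
  then show ?thesis by (auto simp: bisection_def)
qed

lemma compact_open_sub_bisection:
  assumes B: "bisection G B" and q: "continuous_on UNIV q" "\<And>W. open W \<Longrightarrow> open (q ` W)"
    and K: "compact K" "open K" "K \<subseteq> q ` B"
  obtains C where "bisection G C" "compact C" "C \<subseteq> B" "q ` C = K"
proof -
  have open_V: "open (B \<inter> q -` K)"
    using B K(2) q(1) by (intro open_Int open_vimage) (auto simp: bisection_def)
  have "\<exists>D. bisection G D \<and> compact D \<and> y \<in> q ` D \<and> D \<subseteq> B \<inter> q -` K" if y: "y \<in> K" for y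
  proof -
    obtain x where "x \<in> B" "q x = y" using y K(3) by blast
    moreover obtain D where "bisection G D" "compact D" "x \<in> D" "D \<subseteq> B \<inter> q -` K"
      using compact_bisection_basis[OF open_V, of x] calculation y by blast
    ultimately show ?thesis by blast
  qed
  then obtain D where D: "\<And>y. y \<in> K \<Longrightarrow> bisection G (D y) \<and> compact (D y) \<and> y \<in> q ` D y \<and> D y \<subseteq> B \<inter> q -` K"
    by metis
  have "\<And>y. y \<in> K \<Longrightarrow> open (q ` D y)" using D q(2) by (simp add: bisection_def)
  moreover have "K \<subseteq> \<Union>((\<lambda>y. q ` D y) ` K)" using D by blast
  ultimately obtain E where E: "E \<subseteq> K" "finite E" "K \<subseteq> \<Union>((\<lambda>y. q ` D y) ` E)"
    using compactE_image[OF K(1), of K "\<lambda>y. q ` D y"] by blast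
  have CB: "\<Union>(D ` E) \<subseteq> B" using D E by blast
  have "bisection G (\<Union>(D ` E))"
    using D E B CB by (auto simp: bisection_def intro: inj_on_subset)
  moreover have "compact (\<Union>(D ` E))" using D E by (intro compact_UN) auto
  moreover have "q ` \<Union>(D ` E) = K" using D E by blast
  ultimately show ?thesis using CB that by blast
qed

lemma inner_content_image_le:
  assumes content: "compact_open_content (units G) p" and B: "bisection G B"
    and q1: "continuous_on UNIV q1" "\<And>W. open W \<Longrightarrow> open (q1 ` W)"
    and q2: "continuous_on UNIV q2" "\<And>W. open W \<Longrightarrow> open (q2 ` W)" "\<And>g. q2 g \<in> units G"
    and pq: "\<And>C. bisection G C \<Longrightarrow> compact C \<Longrightarrow> p (q1 ` C) = p (q2 ` C)"
  shows "compact_open_content.inner_content (units G) p (q1 ` B)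
      \<le> compact_open_content.inner_content (units G) p (q2 ` B)"
proof (rule compact_open_content.inner_content_least[OF content])
  interpret compact_open_content "units G" p by (rule content)
  fix K assume K: "K \<in> compact_opens" "K \<subseteq> q1 ` B"
  obtain C where C: "bisection G C" "compact C" "C \<subseteq> B" "q1 ` C = K"
    using compact_open_sub_bisection[OF B q1] K by (auto simp: compact_opens_def)
  have "compact (q2 ` C)"
    using compact_continuous_image[OF continuous_on_subset[OF q2(1)] C(2)] by simp
  moreover have "open (q2 ` C)" using C(1) q2(2) by (simp add: bisection_def)
  moreover have "q2 ` C \<subseteq> units G" using q2(3) by blast
  ultimately have "q2 ` C \<in> compact_opens" by (simp add: compact_opens_def)
  then have "p (q2 ` C) \<le> inner_content (q2 ` B)" using C by (intro inner_content_upper) auto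
  then show "p K \<le> inner_content (q2 ` B)" using pq[OF C(1,2)] C(4) by simp
qed

lemma invariant_measure_of_content:
  assumes content: "compact_open_content (units G) p"
    and invariant: "\<And>C. bisection G C \<Longrightarrow> compact C \<Longrightarrow> p (gsrc G ` C) = p (grng G ` C)"
  obtains \<mu> where "\<mu> \<in> inv_measures G" "\<And>K. compact K \<Longrightarrow> open K \<Longrightarrow> K \<subseteq> units G \<Longrightarrow> measure \<mu> K = p K"
proof -
  interpret compact_open_content "units G" p by (rule content)
  obtain \<mu> where \<mu>: "prob_space \<mu>" "space \<mu> = units G" "sets \<mu> = sets (restrict_space borel (units G))"
    "\<And>V. open V \<Longrightarrow> V \<subseteq> units G \<Longrightarrow> measure \<mu> V = inner_content V"
    using exists_measure_extending_content by (elim exE conjE) blast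
  have inner_eq: "inner_content (gsrc G ` B) = inner_content (grng G ` B)" if B: "bisection G B" for B
  proof (rule antisym)
    show "inner_content (gsrc G ` B) \<le> inner_content (grng G ` B)"
      by (rule inner_content_image_le[OF content B continuous_gsrc open_gsrc_image
            continuous_grng open_grng_image grng_in_units[OF ample_is_groupoid]
            invariant])
    show "inner_content (grng G ` B) \<le> inner_content (gsrc G ` B)"
      by (rule inner_content_image_le[OF content B continuous_grng open_grng_image
            continuous_gsrc open_gsrc_image gsrc_in_units[OF ample_is_groupoid]])
         (use invariant in auto)
  qed
  have "emeasure \<mu> (gsrc G ` B) = emeasure \<mu> (grng G ` B)" if B: "bisection G B" for B
  proof -
    have "open B" using B by (simp add: bisection_def)
    moreover have "gsrc G ` B \<subseteq> units G" "grng G ` B \<subseteq> units G"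
      using gsrc_in_units[OF ample_is_groupoid] grng_in_units[OF ample_is_groupoid]
      by blast+
    ultimately have "measure \<mu> (gsrc G ` B) = measure \<mu> (grng G ` B)"
      using \<mu>(4) open_gsrc_image open_grng_image inner_eq[OF B] by simp
    then show ?thesis
      by (simp add: finite_measure.emeasure_eq_measure[OF prob_space.axioms(1)[OF \<mu>(1)]])
  qed
  then have "\<mu> \<in> inv_measures G" using \<mu> by (simp add: inv_measures_def)
  moreover have "measure \<mu> K = p K" if "compact K" "open K" "K \<subseteq> units G" for K
    using \<mu>(4)[of K] inner_content_compact_open[of K] that by (simp add: compact_opens_def)
  ultimately show ?thesis using that by blast
qed

end

section \<open>The upper bound\<close>

lemma cluster_point_mem_closed:
  assumes cluster: "inf (nhds p) (filtermap f F) \<noteq> bot" and "closed S"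
    and "eventually (\<lambda>n. f n \<in> S) F"
  shows "p \<in> S"
proof (rule ccontr)
  assume "p \<notin> S"
  then have "eventually (\<lambda>x. x \<in> - S) (nhds p)"
    using \<open>closed S\<close> by (intro eventually_nhds_in_open) auto
  moreover have "eventually (\<lambda>x. x \<in> S) (filtermap f F)"
    using assms(3) by (simp add: eventually_filtermap)
  ultimately have "eventually (\<lambda>x. False) (inf (nhds p) (filtermap f F))"
    unfolding eventually_inf by blast
  then show False using cluster by (simp add: eventually_False)
qed

lemma exists_cluster_point_unit_cube:
  fixes \<Phi> :: "'i \<Rightarrow> 'k \<Rightarrow> real"
  assumes "F \<noteq> bot" and "\<And>n k. \<Phi> n k \<in> {0..1}"
  obtains p where "inf (nhds p) (filtermap \<Phi> F) \<noteq> bot"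
proof -
  have "compactin (product_topology (\<lambda>_. euclidean) UNIV) (PiE UNIV (\<lambda>_::'k. {0..1::real}))"
    unfolding compactin_PiE by simp
  then have "compact (PiE UNIV (\<lambda>_::'k. {0..1::real}))"
    by (simp add: euclidean_product_topology compactin_euclidean_iff)
  moreover have "eventually (\<lambda>x. x \<in> PiE UNIV (\<lambda>_. {0..1})) (filtermap \<Phi> F)"
    using assms(2) by (simp add: eventually_filtermap PiE_UNIV_domain)
  moreover have "filtermap \<Phi> F \<noteq> bot" using assms(1) by (simp add: filtermap_bot_iff)
  ultimately show ?thesis
    using that unfolding compact_filter by blast
qed

lemma sup_measure_nonneg: "0 \<le> sup_measure G A"
  unfolding sup_measure_def by (rule Sup_upper) simp

lemma sup_measure_upper: "\<mu> \<in> inv_measures G \<Longrightarrow> ereal (measure \<mu> A) \<le> sup_measure G A"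
  unfolding sup_measure_def by (rule Sup_upper) blast

lemma exists_unit_dens_avg_gt:
  assumes "ereal c < dens_sup G D A" "0 \<le> c"
  shows "\<exists>v \<in> units G. c < dens_avg G D A v"
proof -
  obtain x where "x \<in> insert 0 ((\<lambda>u. ereal (dens_avg G D A u)) ` units G)" "ereal c < x"
    using assms(1) less_Sup_iff unfolding dens_sup_def by blast
  then show ?thesis using assms(2) by auto
qed

context
  fixes G :: "('a::t2_space, 'b) groupoid_scheme" and S :: "nat \<Rightarrow> 'a normal_data"
    and u :: "nat \<Rightarrow> 'a" and F :: "nat filter" and p :: "'a set \<Rightarrow> real"
  assumes ample: "ample_groupoid G" and normal: "\<And>n. normal_set G (S n)"
    and units: "\<And>n. u n \<in> units G"
    and cluster: "inf (nhds p) (filtermap (\<lambda>n K. dens_avg G (S n) K (u n)) F) \<noteq> bot"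
begin

lemma density_cluster_point_content: "compact_open_content (units G) p"
proof
  note groupoid = ample_is_groupoid[OF ample]
  note limit = cluster_point_mem_closed[OF cluster]
  have "p \<in> {f. 0 \<le> f K}" for K
    by (rule limit) (auto intro!: closed_Collect_le continuous_intros
        simp: dens_avg_nonneg finite_fibre_nd_set[OF groupoid normal])
  then show "\<And>K. 0 \<le> p K" by simp
  have "p \<in> {f. f (K \<union> K') = f K + f K'}" if "K \<inter> K' = {}" for K K'
    by (rule limit) (auto intro!: closed_Collect_eq continuous_intros simp: dens_avg_Un[OF that])
  then show "\<And>K K'. K \<inter> K' = {} \<Longrightarrow> p (K \<union> K') = p K + p K'" by simp
  have "p \<in> {f. f (units G) = 1}"
    by (rule limit) (auto intro!: closed_Collect_eq continuous_intros
        simp: dens_avg_units[OF groupoid normal units])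
  then show "p (units G) = 1" by simp
qed (use compact_units[OF ample] open_units[OF ample] units_compact_open_basis[OF ample] in auto)

lemma density_cluster_point_gsrc_le:
  assumes fol: "folner G S" and F: "F \<le> sequentially"
    and K: "compact K" "inj_on (gsrc G) K" "inj_on (grng G) K"
  shows "p (gsrc G ` K) \<le> p (grng G ` K)"
proof (rule field_le_epsilon)
  fix e :: real assume e: "0 < e"
  note groupoid = ample_is_groupoid[OF ample]
  have "(\<lambda>n. SUP v\<in>units G. folner_ratio G K (S n) v) \<longlonglongrightarrow> 0"
    using fol K(1) unfolding folner_def folner_ratio_def by blast
  then have "eventually (\<lambda>n. (SUP v\<in>units G. folner_ratio G K (S n) v) < e) sequentially"
    using e by (rule order_tendstoD(2))
  moreover have "folner_ratio G K (S n) (u n) \<le> (SUP v\<in>units G. folner_ratio G K (S n) v)" for n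
    using folner_ratio_le_1[OF groupoid normal _ K(2,3)] units
    by (intro cSUP_upper bdd_aboveI2) auto
  ultimately have "eventually (\<lambda>n. dens_avg G (S n) (gsrc G ` K) (u n)
      \<le> dens_avg G (S n) (grng G ` K) (u n) + e) sequentially"
    using dens_avg_gsrc_image_le[OF groupoid normal units K(2,3)]
    by (elim eventually_mono) (smt (verit))
  then have "p \<in> {f. f (gsrc G ` K) \<le> f (grng G ` K) + e}"
    by (intro cluster_point_mem_closed[OF cluster] filter_leD[OF F])
       (auto intro!: closed_Collect_le continuous_intros)
  then show "p (gsrc G ` K) \<le> p (grng G ` K) + e" by simp
qed

lemma density_cluster_point_invariant:
  assumes fol: "folner G S" and F: "F \<le> sequentially" and C: "bisection G C" "compact C"
  shows "p (gsrc G ` C) = p (grng G ` C)"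
proof (rule antisym)
  note groupoid = ample_is_groupoid[OF ample]
  have inj: "inj_on (gsrc G) C" "inj_on (grng G) C" using C by (auto simp: bisection_def)
  show "p (gsrc G ` C) \<le> p (grng G ` C)"
    by (rule density_cluster_point_gsrc_le[OF fol F C(2) inj])
  have "compact (ginv G ` C)"
    by (rule compact_continuous_image[OF continuous_on_subset[OF continuous_ginv[OF ample]] C(2)]) simp
  from density_cluster_point_gsrc_le[OF fol F this inj_on_gsrc_ginv_image[OF groupoid inj(2)]
      inj_on_grng_ginv_image[OF groupoid inj(1)]]
  show "p (grng G ` C) \<le> p (gsrc G ` C)"
    unfolding gsrc_image_ginv[OF groupoid] grng_image_ginv[OF groupoid] .
qed

end

context
  fixes G :: "('a::t2_space, 'b) groupoid_scheme" and S :: "nat \<Rightarrow> 'a normal_data" and A :: "'a set"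
  assumes ample: "ample_groupoid G" and fol: "folner G S"
    and A: "A \<subseteq> units G" "compact A" "open A"
begin

lemma exists_invariant_measure_ge_density:
  assumes units: "\<And>n. u n \<in> units G"
    and frequent: "frequently (\<lambda>n. c < dens_avg G (S n) A (u n)) sequentially"
  obtains \<mu> where "\<mu> \<in> inv_measures G" "c \<le> measure \<mu> A"
proof -
  note groupoid = ample_is_groupoid[OF ample]
  have normal: "\<And>n. normal_set G (S n)" using fol by (simp add: folner_def)
  define F where "F = inf sequentially (principal {n. c < dens_avg G (S n) A (u n)})"
  have "F \<noteq> bot"
    using frequent by (simp add: F_def frequently_def eventually_inf_principal trivial_limit_def)
  moreover have "dens_avg G (S n) K (u n) \<in> {0..1}" for n K
    using dens_avg_nonneg[OF finite_fibre_nd_set[OF groupoid normal]]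
      dens_avg_le_1[OF finite_fibre_nd_set[OF groupoid normal]] by auto
  ultimately obtain p where cluster: "inf (nhds p) (filtermap (\<lambda>n K. dens_avg G (S n) K (u n)) F) \<noteq> bot"
    by (rule exists_cluster_point_unit_cube)
  have "F \<le> sequentially" by (simp add: F_def)
  then obtain \<mu> where \<mu>: "\<mu> \<in> inv_measures G" "measure \<mu> A = p A"
    using invariant_measure_of_content[OF ample density_cluster_point_content[OF ample normal units cluster]]
      density_cluster_point_invariant[OF ample normal units cluster fol] A by metis
  have "p \<in> {f. c \<le> f A}"
    by (rule cluster_point_mem_closed[OF cluster])
       (auto intro!: closed_Collect_le continuous_intros simp: F_def eventually_inf_principal less_imp_le)
  then show ?thesis using that \<mu> by simp
qed

lemma upper_density_le_sup_measure: "upper_density G S A \<le> sup_measure G A"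
  unfolding upper_density_def
proof (rule dense_le)
  fix y assume y: "y < limsup (\<lambda>n. dens_sup G (S n) A)"
  show "y \<le> sup_measure G A"
  proof (cases "y \<le> 0")
    case True
    then show ?thesis using sup_measure_nonneg order_trans by blast
  next
    case False
    with y obtain c where c: "y = ereal c" "0 < c" by (cases y) auto
    have frequent: "frequently (\<lambda>n. y < dens_sup G (S n) A) sequentially"
    proof (rule ccontr)
      assume "\<not> frequently (\<lambda>n. y < dens_sup G (S n) A) sequentially"
      then have "limsup (\<lambda>n. dens_sup G (S n) A) \<le> y"
        by (intro Limsup_bounded) (simp add: frequently_def not_less)
      then show False using y by simp
    qed
    define u where "u n = (SOME v. v \<in> units G \<and> (y < dens_sup G (S n) A \<longrightarrow> c < dens_avg G (S n) A v))" for n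
    have "u n \<in> units G \<and> (y < dens_sup G (S n) A \<longrightarrow> c < dens_avg G (S n) A (u n))" for n
      unfolding u_def
      by (rule someI_ex) (use exists_unit_dens_avg_gt[of c] c units_def in \<open>fastforce\<close>)
    then obtain \<mu> where "\<mu> \<in> inv_measures G" "c \<le> measure \<mu> A"
      using exists_invariant_measure_ge_density[of u c] frequent by (metis (mono_tags, lifting) frequently_elim1)
    then show ?thesis using sup_measure_upper c by (metis ereal_less_eq(3) order_trans)
  qed
qed

end

section \<open>The lower bound\<close>

lemma (in finite_measure) sum_measure_le_of_indicator_le:
  assumes "finite I" and P: "\<And>i. i \<in> I \<Longrightarrow> P i \<in> sets M" and B: "B \<in> sets M"
    and le: "\<And>x. x \<in> space M \<Longrightarrow> (\<Sum>i\<in>I. indicator (P i) x) \<le> c * indicator B x"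
  shows "(\<Sum>i\<in>I. measure M (P i)) \<le> c * measure M B"
proof -
  have int: "integrable M (indicator E :: 'a \<Rightarrow> real)" if "E \<in> sets M" for E
    using that by (intro integrable_real_indicator) (simp_all add: emeasure_finite less_top[symmetric])
  have "(\<Sum>i\<in>I. measure M (P i)) = (\<Sum>i\<in>I. integral\<^sup>L M (indicator (P i)))"
    using P by (simp add: Bochner_Integration.integral_indicator)
  also have "\<dots> = integral\<^sup>L M (\<lambda>x. \<Sum>i\<in>I. indicator (P i) x)"
    by (rule Bochner_Integration.integral_sum[symmetric]) (use P int in auto)
  also have "\<dots> \<le> integral\<^sup>L M (\<lambda>x. c * indicator B x)"
    using P B int le by (intro integral_mono Bochner_Integration.integrable_sum integrable_mult_right) auto
  also have "\<dots> = c * measure M B"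
    using B by (simp add: Bochner_Integration.integral_indicator)
  finally show ?thesis .
qed

lemma (in prob_space) prob_le_sum_Int_cover:
  assumes "finite L" and U: "\<And>l. l \<in> L \<Longrightarrow> U l \<in> events" and A: "A \<in> events"
    and cover: "1 - \<epsilon> \<le> prob (\<Union>l\<in>L. U l)"
  shows "prob A - \<epsilon> \<le> (\<Sum>l\<in>L. prob (A \<inter> U l))"
proof -
  have UN: "(\<Union>l\<in>L. U l) \<in> events" using assms(1) U by blast
  have "prob A \<le> prob ((A \<inter> (\<Union>l\<in>L. U l)) \<union> (space M - (\<Union>l\<in>L. U l)))"
    using A UN sets.sets_into_space[OF A] by (intro finite_measure_mono) auto
  also have "\<dots> \<le> prob (A \<inter> (\<Union>l\<in>L. U l)) + prob (space M - (\<Union>l\<in>L. U l))"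
    using A UN by (intro measure_Un_le) auto
  also have "prob (space M - (\<Union>l\<in>L. U l)) \<le> \<epsilon>"
    using prob_compl[OF UN] cover by simp
  also have "A \<inter> (\<Union>l\<in>L. U l) = (\<Union>l\<in>L. A \<inter> U l)" by blast
  also have "prob (\<Union>l\<in>L. A \<inter> U l) \<le> (\<Sum>l\<in>L. prob (A \<inter> U l))"
    using A U by (intro finite_measure_subadditive_finite assms(1)) auto
  finally show ?thesis by simp
qed

lemma measure_gsrc_column:
  assumes ample: "ample_groupoid G" and \<mu>: "\<mu> \<in> inv_measures G"
    and multisection: "compact_open_multisection G F C" and ij: "i \<in> F" "j \<in> F"
    and A: "open A"
  shows "measure \<mu> (gsrc G ` (C i j \<inter> grng G -` A)) = measure \<mu> (A \<inter> C i i)"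
proof -
  note groupoid = ample_is_groupoid[OF ample]
  have "open (grng G -` A)" using A continuous_grng[OF ample] by (rule open_vimage)
  then have "bisection G (C i j \<inter> grng G -` A)"
    using multisection_bisection[OF groupoid multisection ij]
    by (auto simp: bisection_def intro: inj_on_subset)
  moreover have "grng G ` (C i j \<inter> grng G -` A) = A \<inter> C i i"
    using multisection_grng[OF groupoid multisection ij] multisection_grng_surj[OF groupoid multisection ij]
    by fastforce
  ultimately show ?thesis using measure_gsrc_eq_grng[OF \<mu>] by metis
qed

context
  fixes G :: "('a::t2_space, 'b) groupoid_scheme" and D :: "'a normal_data"
    and \<mu> :: "'a measure" and A :: "'a set" and s :: real
  assumes ample: "ample_groupoid G" and normal: "normal_set G D" and \<mu>: "\<mu> \<in> inv_measures G"
    and A: "A \<subseteq> units G" "open A"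
    and density: "\<And>u. u \<in> units G \<Longrightarrow> dens_avg G D A u \<le> s"
begin

lemma level_in_sets:
  assumes "l \<in> {1..nd_m D}" "i \<in> nd_F D l"
  shows "nd_C D l i i \<in> sets \<mu>"
  using multisection_bisection[OF ample_is_groupoid[OF ample] normal_set_multisection[OF
        ample_is_groupoid[OF ample] normal assms(1)] assms(2,2)]
    multisection_level_units[OF ample_is_groupoid[OF ample] normal_set_multisection[OF
        ample_is_groupoid[OF ample] normal assms(1)] assms(2)]
  by (intro open_in_sets_inv_measure[OF \<mu>]) (auto simp: bisection_def)

lemma column_source_subset_base:
  assumes "l \<in> {1..nd_m D}" "i \<in> nd_F D l"
  shows "gsrc G ` (nd_C D l i (nd_i D l) \<inter> grng G -` A) \<subseteq> nd_C D l (nd_i D l) (nd_i D l)"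
  using multisection_gsrc[OF ample_is_groupoid[OF ample] normal_set_multisection[OF
        ample_is_groupoid[OF ample] normal assms(1)] assms(2) normal_set_base_index[OF
        ample_is_groupoid[OF ample] normal assms(1)]]
  by auto

lemma column_source_in_sets:
  assumes l: "l \<in> {1..nd_m D}" and i: "i \<in> nd_F D l"
  shows "gsrc G ` (nd_C D l i (nd_i D l) \<inter> grng G -` A) \<in> sets \<mu>"
proof (rule open_in_sets_inv_measure[OF \<mu>])
  note groupoid = ample_is_groupoid[OF ample]
  note multisection = normal_set_multisection[OF groupoid normal l]
    and base = normal_set_base_index[OF groupoid normal l]
  show "open (gsrc G ` (nd_C D l i (nd_i D l) \<inter> grng G -` A))"
    using multisection_bisection[OF groupoid multisection i base] A(2) continuous_grng[OF ample]
    by (intro open_gsrc_image[OF ample] open_Int open_vimage) (auto simp: bisection_def)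
  show "gsrc G ` (nd_C D l i (nd_i D l) \<inter> grng G -` A) \<subseteq> units G"
    using column_source_subset_base[OF l i] multisection_level_units[OF groupoid multisection base]
    by blast
qed

lemma sum_indicator_column_sources_le:
  assumes l: "l \<in> {1..nd_m D}"
  shows "(\<Sum>i\<in>nd_F D l. indicator (gsrc G ` (nd_C D l i (nd_i D l) \<inter> grng G -` A)) x)
      \<le> real (card (nd_F D l)) * s * indicator (nd_C D l (nd_i D l) (nd_i D l)) x"
proof (cases "x \<in> nd_C D l (nd_i D l) (nd_i D l)")
  case True
  note groupoid = ample_is_groupoid[OF ample]
  have "x \<in> units G"
    using True multisection_level_units[OF groupoid normal_set_multisection[OF groupoid normal l]
        normal_set_base_index[OF groupoid normal l]] by blast
  moreover have "0 < card (nd_F D l)"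
    using card_fibre_nd_set_pos[OF groupoid normal calculation] card_fibre_nd_set[OF groupoid normal l True]
    by simp
  then have "(\<Sum>i\<in>nd_F D l. indicator (gsrc G ` (nd_C D l i (nd_i D l) \<inter> grng G -` A)) x)
      = real (card (nd_F D l)) * dens_avg G D A x"
    using sum_indicator_fibre_nd_set[OF groupoid normal l True, of A]
      card_fibre_nd_set[OF groupoid normal l True]
    by (simp add: dens_avg_def)
  ultimately show ?thesis using True density by (simp add: mult_left_mono)
next
  case False
  then have "\<forall>i\<in>nd_F D l. x \<notin> gsrc G ` (nd_C D l i (nd_i D l) \<inter> grng G -` A)"
    using column_source_subset_base[OF l] by blast
  then show ?thesis using False by (simp add: indicator_def)
qed

lemma sum_measure_levels_le:
  assumes l: "l \<in> {1..nd_m D}"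
  shows "(\<Sum>i\<in>nd_F D l. measure \<mu> (A \<inter> nd_C D l i i))
      \<le> real (card (nd_F D l)) * s * measure \<mu> (nd_C D l (nd_i D l) (nd_i D l))"
proof -
  note groupoid = ample_is_groupoid[OF ample]
  note base = normal_set_base_index[OF groupoid normal l]
  have "(\<Sum>i\<in>nd_F D l. measure \<mu> (gsrc G ` (nd_C D l i (nd_i D l) \<inter> grng G -` A)))
      \<le> real (card (nd_F D l)) * s * measure \<mu> (nd_C D l (nd_i D l) (nd_i D l))"
    using finite_normal_set_index[OF groupoid normal l] level_in_sets[OF l base]
      column_source_in_sets[OF l] sum_indicator_column_sources_le[OF l]
    by (intro finite_measure.sum_measure_le_of_indicator_le prob_space.axioms(1)
        inv_measure_prob_space[OF \<mu>]) auto
  then show ?thesis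
    using measure_gsrc_column[OF ample \<mu> normal_set_multisection[OF groupoid normal l] _ base A(2)]
    by simp
qed

lemma sum_measure_bases: "(\<Sum>l\<in>{1..nd_m D}. measure \<mu> (nd_C D l (nd_i D l) (nd_i D l))) = 1"
proof -
  note groupoid = ample_is_groupoid[OF ample]
  have "measure \<mu> (units G) = 1"
    using prob_space.prob_space[OF inv_measure_prob_space[OF \<mu>]] inv_measure_space[OF \<mu>] by simp
  then show ?thesis
    unfolding normal_set_bases_cover[OF groupoid normal]
    using normal_set_bases_disjoint[OF groupoid normal] level_in_sets normal_set_base_index[OF groupoid normal]
    by (subst (asm) finite_measure.finite_measure_finite_Union[OF prob_space.axioms(1)[OF
          inv_measure_prob_space[OF \<mu>]]]) auto
qed

lemma sum_measure_levels_le_controlled: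
  assumes controlled: "controlled_height N D" and "0 \<le> s"
  shows "(\<Sum>l\<in>{1..nd_m D}. \<Sum>i\<in>nd_F D l. measure \<mu> (A \<inter> nd_C D l i i)) \<le> real N * real (height D) * s"
proof -
  have "(\<Sum>l\<in>{1..nd_m D}. \<Sum>i\<in>nd_F D l. measure \<mu> (A \<inter> nd_C D l i i))
      \<le> (\<Sum>l\<in>{1..nd_m D}. real (card (nd_F D l)) * s * measure \<mu> (nd_C D l (nd_i D l) (nd_i D l)))"
    by (intro sum_mono sum_measure_levels_le)
  also have "\<dots> \<le> (\<Sum>l\<in>{1..nd_m D}. real N * real (height D) * s * measure \<mu> (nd_C D l (nd_i D l) (nd_i D l)))"
  proof (rule sum_mono, rule mult_right_mono)
    fix l assume "l \<in> {1..nd_m D}"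
    then have "real (card (nd_F D l)) \<le> real N * real (height D)"
      using controlled unfolding controlled_height_def by (metis of_nat_le_iff of_nat_mult)
    then show "real (card (nd_F D l)) * s \<le> real N * real (height D) * s"
      using \<open>0 \<le> s\<close> by (rule mult_right_mono)
  qed simp
  also have "\<dots> = real N * real (height D) * s"
    using sum_measure_bases by (simp add: sum_distrib_left[symmetric])
  finally show ?thesis .
qed

lemma measure_le_sum_slice:
  assumes f: "\<And>l. l \<in> {1..nd_m D} \<Longrightarrow> f l \<in> nd_F D l"
    and cover: "ereal (1 - \<epsilon>) \<le> inf_measure G (\<Union>l\<in>{1..nd_m D}. nd_C D l (f l) (f l))"
  shows "measure \<mu> A - \<epsilon> \<le> (\<Sum>l\<in>{1..nd_m D}. measure \<mu> (A \<inter> nd_C D l (f l) (f l)))"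
proof (rule prob_space.prob_le_sum_Int_cover[OF inv_measure_prob_space[OF \<mu>]])
  show "A \<in> sets \<mu>" using open_in_sets_inv_measure[OF \<mu> A(2,1)] .
  show "\<And>l. l \<in> {1..nd_m D} \<Longrightarrow> nd_C D l (f l) (f l) \<in> sets \<mu>"
    using f by (intro level_in_sets)
  show "1 - \<epsilon> \<le> measure \<mu> (\<Union>l\<in>{1..nd_m D}. nd_C D l (f l) (f l))"
    using cover inv_measure_ge_inf_measure[OF \<mu>] order_trans ereal_less_eq(3) by metis
qed simp

lemma height_mul_measure_le:
  assumes good: "good G M \<epsilon> D"
  shows "real (height D) * (measure \<mu> A - \<epsilon>)
      \<le> (\<Sum>l\<in>{1..nd_m D}. \<Sum>i\<in>nd_F D l. measure \<mu> (A \<inter> nd_C D l i i))"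
proof -
  note groupoid = ample_is_groupoid[OF ample]
  obtain f where f0: "\<forall>l\<in>{1..nd_m D}. inj_on (f l) {0..<height D} \<and> f l ` {0..<height D} \<subseteq> nd_F D l
        \<and> f l 0 = nd_i D l"
    and cover0: "\<forall>k<height D. inf_measure G (\<Union>l\<in>{1..nd_m D}. nd_C D l (f l k) (f l k)) \<ge> ereal (1 - \<epsilon>)"
    using good unfolding good_def by (elim exE conjE) (rule that)
  have f: "inj_on (f l) {0..<height D} \<and> f l ` {0..<height D} \<subseteq> nd_F D l" if "l \<in> {1..nd_m D}" for l
    using f0 that by blast
  have cover: "ereal (1 - \<epsilon>) \<le> inf_measure G (\<Union>l\<in>{1..nd_m D}. nd_C D l (f l k) (f l k))"
    if "k < height D" for k
    using cover0 that by blast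
  have level: "measure \<mu> A - \<epsilon> \<le> (\<Sum>l\<in>{1..nd_m D}. measure \<mu> (A \<inter> nd_C D l (f l k) (f l k)))"
    if k: "k < height D" for k
    using f k cover[OF k] by (intro measure_le_sum_slice) (auto simp: image_subset_iff)
  have "real (height D) * (measure \<mu> A - \<epsilon>) = (\<Sum>k<height D. measure \<mu> A - \<epsilon>)" by simp
  also have "\<dots> \<le> (\<Sum>k<height D. \<Sum>l\<in>{1..nd_m D}. measure \<mu> (A \<inter> nd_C D l (f l k) (f l k)))"
    by (intro sum_mono level) simp
  also have "\<dots> = (\<Sum>l\<in>{1..nd_m D}. \<Sum>k\<in>{0..<height D}. measure \<mu> (A \<inter> nd_C D l (f l k) (f l k)))"
    by (subst sum.swap) (simp add: lessThan_atLeast0)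
  also have "\<dots> \<le> (\<Sum>l\<in>{1..nd_m D}. \<Sum>i\<in>nd_F D l. measure \<mu> (A \<inter> nd_C D l i i))"
  proof (rule sum_mono)
    fix l assume l: "l \<in> {1..nd_m D}"
    have "(\<Sum>k\<in>{0..<height D}. measure \<mu> (A \<inter> nd_C D l (f l k) (f l k)))
        = (\<Sum>i\<in>f l ` {0..<height D}. measure \<mu> (A \<inter> nd_C D l i i))"
      using sum.reindex[of "f l" "{0..<height D}" "\<lambda>i. measure \<mu> (A \<inter> nd_C D l i i)"] f[OF l] by simp
    also have "\<dots> \<le> (\<Sum>i\<in>nd_F D l. measure \<mu> (A \<inter> nd_C D l i i))"
      using f[OF l] finite_normal_set_index[OF groupoid normal l] by (intro sum_mono2) auto
    finally show "(\<Sum>k\<in>{0..<height D}. measure \<mu> (A \<inter> nd_C D l (f l k) (f l k)))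
        \<le> (\<Sum>i\<in>nd_F D l. measure \<mu> (A \<inter> nd_C D l i i))" .
  qed
  finally show ?thesis .
qed

lemma measure_le_density_bound:
  assumes "good G M \<epsilon> D" "controlled_height N D" "0 \<le> s"
  shows "measure \<mu> A \<le> real N * s + \<epsilon>"
proof -
  have "real (height D) * (measure \<mu> A - \<epsilon>) \<le> real (height D) * (real N * s)"
    using height_mul_measure_le[OF assms(1)] sum_measure_levels_le_controlled[OF assms(2,3)]
    by (simp add: algebra_simps)
  then show ?thesis
    using height_pos[OF ample_is_groupoid[OF ample] normal] by simp
qed

end

lemma dens_sup_eq_ereal:
  assumes "is_groupoid G" "normal_set G D"
  obtains s where "dens_sup G D A = ereal s" "0 \<le> s" "\<And>u. u \<in> units G \<Longrightarrow> dens_avg G D A u \<le> s"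
proof -
  have "dens_sup G D A \<le> 1"
    unfolding dens_sup_def
    by (rule Sup_least) (use dens_avg_le_1[OF finite_fibre_nd_set[OF assms]] in auto)
  moreover have "0 \<le> dens_sup G D A" unfolding dens_sup_def by (rule Sup_upper) simp
  ultimately obtain s where s: "dens_sup G D A = ereal s" "0 \<le> s"
    by (cases "dens_sup G D A") auto
  moreover have "ereal (dens_avg G D A u) \<le> dens_sup G D A" if "u \<in> units G" for u
    unfolding dens_sup_def by (rule Sup_upper) (use that in auto)
  ultimately show ?thesis using that by simp
qed

lemma measure_div_le_dens_sup:
  assumes ample: "ample_groupoid G" and "N > 0" and normal: "normal_set G D"
    and "good G M \<epsilon> D" "controlled_height N D" and \<mu>: "\<mu> \<in> inv_measures G"
    and A: "A \<subseteq> units G" "open A"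
  shows "ereal ((measure \<mu> A - \<epsilon>) / real N) \<le> dens_sup G D A"
proof -
  obtain s where s: "dens_sup G D A = ereal s" "0 \<le> s" "\<And>u. u \<in> units G \<Longrightarrow> dens_avg G D A u \<le> s"
    using dens_sup_eq_ereal[OF ample_is_groupoid[OF ample] normal, of A] by blast
  then have "measure \<mu> A \<le> real N * s + \<epsilon>"
    using measure_le_density_bound[OF ample normal \<mu> A s(3) assms(4,5) s(2)] by blast
  then show ?thesis using s(1) \<open>N > 0\<close> by (simp add: divide_le_eq algebra_simps)
qed

lemma lower_density_ge:
  assumes ample: "ample_groupoid G" and "N > 0" and eps: "eps \<longlonglongrightarrow> 0" and fol: "folner G S"
    and good: "\<And>n. good G M (eps n) (S n)" and controlled: "\<And>n. controlled_height N (S n)"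
    and A: "A \<subseteq> units G" "open A"
  shows "ereal (1 / real N) * sup_measure G A \<le> lower_density G S A"
proof -
  have normal: "\<And>n. normal_set G (S n)" using fol by (simp add: folner_def)
  have bound: "ereal ((measure \<mu> A - eps n) / real N) \<le> dens_sup G (S n) A"
    if "\<mu> \<in> inv_measures G" for \<mu> n
    by (rule measure_div_le_dens_sup[OF ample \<open>N > 0\<close> normal good controlled that A])
  have "ereal (measure \<mu> A / real N) \<le> lower_density G S A" if \<mu>: "\<mu> \<in> inv_measures G" for \<mu>
  proof -
    have "(\<lambda>n. (measure \<mu> A - eps n) / real N) \<longlonglongrightarrow> (measure \<mu> A - 0) / real N"
      by (intro tendsto_intros eps) (use \<open>N > 0\<close> in simp)
    then have "(\<lambda>n. ereal ((measure \<mu> A - eps n) / real N)) \<longlonglongrightarrow> ereal (measure \<mu> A / real N)"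
      by (simp add: tendsto_ereal)
    then have "ereal (measure \<mu> A / real N) = liminf (\<lambda>n. ereal ((measure \<mu> A - eps n) / real N))"
      using lim_imp_Liminf[OF trivial_limit_sequentially] by metis
    also have "\<dots> \<le> lower_density G S A"
      unfolding lower_density_def by (intro Liminf_mono always_eventually allI bound[OF \<mu>])
    finally show ?thesis .
  qed
  then have "ereal (measure \<mu> A) \<le> ereal (real N) * lower_density G S A" if "\<mu> \<in> inv_measures G" for \<mu>
    using ereal_mult_left_mono[of "ereal (measure \<mu> A / real N)" _ "ereal (real N)"] that \<open>N > 0\<close> by simp
  moreover have "0 \<le> lower_density G S A"
    unfolding lower_density_def dens_sup_def
    by (intro Liminf_bounded always_eventually allI Sup_upper) simp
  ultimately have "sup_measure G A \<le> ereal (real N) * lower_density G S A"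
    unfolding sup_measure_def by (intro Sup_least) auto
  then have "ereal (1 / real N) * sup_measure G A \<le> ereal (1 / real N) * (ereal (real N) * lower_density G S A)"
    by (rule ereal_mult_left_mono) simp
  also have "\<dots> = lower_density G S A"
    using \<open>N > 0\<close> by (simp add: mult.assoc[symmetric])
  finally show ?thesis .
qed

theorem mainTheorem14:
  fixes G :: "('a::t2_space, 'b) groupoid_scheme"
    and M N :: nat and eps :: "nat \<Rightarrow> real"
    and S :: "nat \<Rightarrow> 'a normal_data" and A :: "'a set"
  assumes "ample_groupoid G"
    and "M > 0" and "N > 0"
    and "decseq eps" and "\<forall>n. eps n > 0" and "eps \<longlonglongrightarrow> 0"
    and "folner G S"
    and "\<forall>n. good G M (eps n) (S n) \<and> controlled_height N (S n)"
    and "A \<subseteq> units G"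
    and "openin (top_of_set (units G)) A" and "closedin (top_of_set (units G)) A"
  shows "ereal (1 / real N) * sup_measure G A \<le> lower_density G S A
       \<and> lower_density G S A \<le> upper_density G S A
       \<and> upper_density G S A \<le> sup_measure G A
       \<and> (N = 1 \<longrightarrow> sup_measure G A = lower_density G S A
                    \<and> sup_measure G A = upper_density G S A)"
proof -
  have "open A" using assms(10) open_units[OF assms(1)] by (rule openin_open_trans)
  have "compact A" using compact_units[OF assms(1)] assms(11) by (rule closedin_compact)
  have lower: "ereal (1 / real N) * sup_measure G A \<le> lower_density G S A"
    using lower_density_ge[OF assms(1,3,6,7) _ _ assms(9) \<open>open A\<close>] assms(8) by blast
  have middle: "lower_density G S A \<le> upper_density G S A"
    unfolding lower_density_def upper_density_def by (rule Liminf_le_Limsup) simp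
  have upper: "upper_density G S A \<le> sup_measure G A"
    by (rule upper_density_le_sup_measure[OF assms(1,7,9) \<open>compact A\<close> \<open>open A\<close>])
  have "N = 1 \<Longrightarrow> sup_measure G A \<le> lower_density G S A"
    using lower by (simp add: one_ereal_def[symmetric])
  then show ?thesis using lower middle upper by (auto intro: antisym order_trans)
qed

end
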